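(* Let $(\mathcal C,\mathbb E,\mathfrak s)$ be an extriangulated category and $\mathcal D$ a class of objects of $\mathcal C$. For $A,C\in\mathcal C$ let $\mathbb I_{\mathcal D}(C,A)$ be the set of $\delta\in\mathbb E(C,A)$ whose realisation $A\xrightarrow{x}B\xrightarrow{y}C$ has $x$ $\mathcal D$-monic, $\mathbb P_{\mathcal D}(C,A)$ the set of those with $y$ $\mathcal D$-epic, and $\mathbb D_{\mathcal D}=\mathbb I_{\mathcal D}\cap\mathbb P_{\mathcal D}$. Then $(\mathbb I_{\mathcal D},\mathfrak s|_{\mathbb I_{\mathcal D}})$, $(\mathbb P_{\mathcal D},\mathfrak s|_{\mathbb P_{\mathcal D}})$ and $(\mathbb D_{\mathcal D},\mathfrak s|_{\mathbb D_{\mathcal D}})$ are external triangulations of $\mathcal C$, and $\mathcal D\subseteq\mathsf{Inj}_{\mathbb I_{\mathcal D}}\mathcal C\subseteq\mathsf{Inj}_{\mathbb D_{\mathcal D}}\mathcal C$ and $\mathcal D\subseteq\mathsf{Proj}_{\mathbb P_{\mathcal D}}\mathcal C\subseteq\mathsf{Proj}_{\mathbb D_{\mathcal D}}\mathcal C$. Suppose moreover that $\mathcal D$ is closed under (arbitrary existing) direct sums and direct summands. Then: (a) if $\mathcal D$ is covariantly finite and all left $\mathcal D$-approximations are $\mathbb E$-inflations, then $\mathcal D=\mathsf{Inj}_{\mathbb I_{\mathcal D}}\mathcal C$ and $\mathcal C$ has enough $\mathbb I_{\mathcal D}$-injectives; (b) if $\mathcal D$ is contravariantly finite and all right $\mathcal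 D$-approximations are $\mathbb E$-deflations, then $\mathcal D=\mathsf{Proj}_{\mathbb P_{\mathcal D}}\mathcal C$ and $\mathcal C$ has enough $\mathbb P_{\mathcal D}$-projectives; (c) if $\mathcal D$ is functorially finite, left (resp. right) $\mathcal D$-approximations are $\mathbb E$-inflations (resp. $\mathbb E$-deflations), and the cones (resp. co-cones) in the corresponding extriangles of left (resp. right) $\mathcal D$-approximations are $\mathcal D$-epic (resp. $\mathcal D$-monic), then $\mathcal D=\mathsf{Inj}_{\mathbb D_{\mathcal D}}\mathcal C=\mathsf{Proj}_{\mathbb D_{\mathcal D}}\mathcal C$ and $\mathcal C$ has enough $\mathbb D_{\mathcal D}$-injectives and enough $\mathbb D_{\mathcal D}$-projectives.
   Context: All categories are additive and idempotent complete. Extriangulated categories $(\mathcal C,\mathbb E,\mathfrak s)$ are in the sense of Nakaoka–Palu ($\mathbb E$ an additive bifunctor $\mathcal C^{op}\times\mathcal C\to\mathsf{Ab}$, $\mathfrak s(\delta)=[A\xrightarrow{x}B\xrightarrow{y}C]$ its realisation, axioms (ET1)–(ET4)$^{op}$); $x$ is called an $\mathbb E$-inflation, $y$ an $\mathbb E$-deflation, and $y$ is the cone of $x$, $x$ the co-cone of $y$. An external triangulation of $\mathcal C$ is a pair $(\mathbb F,\mathfrak t)$ making $(\mathcal C,\mathbb F,\mathfrak t)$ extriangulated; here $\mathbb I_{\mathcal D}$ etc. are subfunctors of $\mathbb E$. For an external triangulation $\mathbb F$, $\mathsf{Inj}_{\mathbb F}\mathcal C$ is the class of $I$ with $\mathbb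 F(-,I)=0$ and $\mathsf{Proj}_{\mathbb F}\mathcal C$ the class of $P$ with $\mathbb F(P,-)=0$; enough injectives means every $A$ has an $\mathbb F$-extriangle $A\to I\to C\dashrightarrow$ with $I$ injective (dually for projectives). A morphism $f:A\to B$ is $\mathcal D$-monic if every morphism $A\to D$, $D\in\mathcal D$, factors through $f$; $\mathcal D$-epic if every morphism $D\to B$, $D\in\mathcal D$, factors through $f$. A left (right) $\mathcal D$-approximation of $A$ is a $\mathcal D$-monic $A\to D$ ($\mathcal D$-epic $D\to A$) with $D\in\mathcal D$; covariantly (contravariantly) finite means every object has a left (right) $\mathcal D$-approximation; functorially finite means both. Whether the inflation of a realisation of $\delta$ is $\mathcal D$-monic does not depend on the chosen representative. *)

theory Defs
  imports Main
begin

text \<open>Cmp g f is the composite g o f.  Ext C A is the abelian group E(C,A), with operations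
  Eadd C A, Eneg C A, Ezero C A.  Pull c A is E(c,A) (written c^* ) and Push C a is
  E(C,a) (written a_* ).  Rlz C A delta x y means that the sequence A -x-> B -y-> C
  belongs to the class s(delta).\<close>

record ('o,'m,'e) extcat =
  Ob :: "'o set"
  Mor :: "'m set"
  Dom :: "'m \<Rightarrow> 'o"
  Cod :: "'m \<Rightarrow> 'o"
  Cmp :: "'m \<Rightarrow> 'm \<Rightarrow> 'm"
  Idm :: "'o \<Rightarrow> 'm"
  Madd :: "'m \<Rightarrow> 'm \<Rightarrow> 'm"
  Mneg :: "'m \<Rightarrow> 'm"
  Mzero :: "'o \<Rightarrow> 'o \<Rightarrow> 'm"
  Ext :: "'o \<Rightarrow> 'o \<Rightarrow> 'e set"
  Eadd :: "'o \<Rightarrow> 'o \<Rightarrow> 'e \<Rightarrow> 'e \<Rightarrow> 'e"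
  Eneg :: "'o \<Rightarrow> 'o \<Rightarrow> 'e \<Rightarrow> 'e"
  Ezero :: "'o \<Rightarrow> 'o \<Rightarrow> 'e"
  Pull :: "'m \<Rightarrow> 'o \<Rightarrow> 'e \<Rightarrow> 'e"
  Push :: "'o \<Rightarrow> 'm \<Rightarrow> 'e \<Rightarrow> 'e"
  Rlz :: "'o \<Rightarrow> 'o \<Rightarrow> 'e \<Rightarrow> 'm \<Rightarrow> 'm \<Rightarrow> bool"

definition Hom :: "('o,'m,'e,'z) extcat_scheme \<Rightarrow> 'o \<Rightarrow> 'o \<Rightarrow> 'm set" where
  "Hom X A B = {f \<in> Mor X. Dom X f = A \<and> Cod X f = B}"

definition is_category :: "('o,'m,'e,'z) extcat_scheme \<Rightarrow> bool" where
  "is_category X \<longleftrightarrow>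
     (\<forall>f\<in>Mor X. Dom X f \<in> Ob X \<and> Cod X f \<in> Ob X) \<and>
     (\<forall>A\<in>Ob X. Idm X A \<in> Hom X A A) \<and>
     (\<forall>A B C f g. f \<in> Hom X A B \<longrightarrow> g \<in> Hom X B C \<longrightarrow> Cmp X g f \<in> Hom X A C) \<and>
     (\<forall>A B C D f g h. f \<in> Hom X A B \<longrightarrow> g \<in> Hom X B C \<longrightarrow> h \<in> Hom X C D \<longrightarrow>
        Cmp X h (Cmp X g f) = Cmp X (Cmp X h g) f) \<and>
     (\<forall>A B f. f \<in> Hom X A B \<longrightarrow> Cmp X f (Idm X A) = f \<and> Cmp X (Idm X B) f = f)"

definition is_preadditive :: "('o,'m,'e,'z) extcat_scheme \<Rightarrow> bool" where
  "is_preadditive X \<longleftrightarrow> is_category X \<and>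
     (\<forall>A\<in>Ob X. \<forall>B\<in>Ob X.
        Mzero X A B \<in> Hom X A B \<and>
        (\<forall>f\<in>Hom X A B. \<forall>g\<in>Hom X A B. Madd X f g \<in> Hom X A B) \<and>
        (\<forall>f\<in>Hom X A B. Mneg X f \<in> Hom X A B) \<and>
        (\<forall>f\<in>Hom X A B. \<forall>g\<in>Hom X A B. \<forall>h\<in>Hom X A B.
            Madd X (Madd X f g) h = Madd X f (Madd X g h)) \<and>
        (\<forall>f\<in>Hom X A B. \<forall>g\<in>Hom X A B. Madd X f g = Madd X g f) \<and>
        (\<forall>f\<in>Hom X A B. Madd X (Mzero X A B) f = f) \<and>
        (\<forall>f\<in>Hom X A B. Madd X (Mneg X f) f = Mzero X A B)) \<and>
     (\<forall>A B C f g g'. f \<in> Hom X A B \<longrightarrow> g \<in> Hom X B C \<longrightarrow> g' \<in> Hom X B C \<longrightarrow>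
        Cmp X (Madd X g g') f = Madd X (Cmp X g f) (Cmp X g' f)) \<and>
     (\<forall>A B C f f' g. f \<in> Hom X A B \<longrightarrow> f' \<in> Hom X A B \<longrightarrow> g \<in> Hom X B C \<longrightarrow>
        Cmp X g (Madd X f f') = Madd X (Cmp X g f) (Cmp X g f'))"

definition biproduct :: "('o,'m,'e,'z) extcat_scheme \<Rightarrow> 'o \<Rightarrow> 'o \<Rightarrow> 'o \<Rightarrow> 'm \<Rightarrow> 'm \<Rightarrow> 'm \<Rightarrow> 'm \<Rightarrow> bool" where
  "biproduct X A1 A2 S i1 i2 p1 p2 \<longleftrightarrow>
     i1 \<in> Hom X A1 S \<and> i2 \<in> Hom X A2 S \<and> p1 \<in> Hom X S A1 \<and> p2 \<in> Hom X S A2 \<and>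
     Cmp X p1 i1 = Idm X A1 \<and> Cmp X p2 i2 = Idm X A2 \<and>
     Cmp X p1 i2 = Mzero X A2 A1 \<and> Cmp X p2 i1 = Mzero X A1 A2 \<and>
     Madd X (Cmp X i1 p1) (Cmp X i2 p2) = Idm X S"

definition is_additive :: "('o,'m,'e,'z) extcat_scheme \<Rightarrow> bool" where
  "is_additive X \<longleftrightarrow> is_preadditive X \<and>
     (\<exists>Z\<in>Ob X. Idm X Z = Mzero X Z Z) \<and>
     (\<forall>A1\<in>Ob X. \<forall>A2\<in>Ob X. \<exists>S i1 i2 p1 p2. biproduct X A1 A2 S i1 i2 p1 p2)"

definition idem_complete :: "('o,'m,'e,'z) extcat_scheme \<Rightarrow> bool" where
  "idem_complete X \<longleftrightarrow>
     (\<forall>A\<in>Ob X. \<forall>e\<in>Hom X A A. Cmp X e e = e \<longrightarrow>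
        (\<exists>B\<in>Ob X. \<exists>r\<in>Hom X A B. \<exists>s\<in>Hom X B A. Cmp X r s = Idm X B \<and> Cmp X s r = e))"

definition iso :: "('o,'m,'e,'z) extcat_scheme \<Rightarrow> 'm \<Rightarrow> bool" where
  "iso X b \<longleftrightarrow> b \<in> Mor X \<and> (\<exists>b'\<in>Hom X (Cod X b) (Dom X b).
       Cmp X b' b = Idm X (Dom X b) \<and> Cmp X b b' = Idm X (Cod X b))"

definition ET1 :: "('o,'m,'e,'z) extcat_scheme \<Rightarrow> bool" where
  "ET1 X \<longleftrightarrow>
     (\<forall>C\<in>Ob X. \<forall>A\<in>Ob X.
        Ezero X C A \<in> Ext X C A \<and>
        (\<forall>d\<in>Ext X C A. \<forall>d'\<in>Ext X C A. Eadd X C A d d' \<in> Ext X C A) \<and>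
        (\<forall>d\<in>Ext X C A. Eneg X C A d \<in> Ext X C A) \<and>
        (\<forall>d\<in>Ext X C A. \<forall>d'\<in>Ext X C A. \<forall>d''\<in>Ext X C A.
           Eadd X C A (Eadd X C A d d') d'' = Eadd X C A d (Eadd X C A d' d'')) \<and>
        (\<forall>d\<in>Ext X C A. \<forall>d'\<in>Ext X C A. Eadd X C A d d' = Eadd X C A d' d) \<and>
        (\<forall>d\<in>Ext X C A. Eadd X C A (Ezero X C A) d = d) \<and>
        (\<forall>d\<in>Ext X C A. Eadd X C A (Eneg X C A d) d = Ezero X C A)) \<and>
     \<comment> \<open>contravariant part E(-,A)\<close>
     (\<forall>A\<in>Ob X. \<forall>C C' c. c \<in> Hom X C' C \<longrightarrow>
        (\<forall>d\<in>Ext X C A. Pull X c A d \<in> Ext X C' A) \<and>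
        (\<forall>d\<in>Ext X C A. \<forall>d'\<in>Ext X C A.
           Pull X c A (Eadd X C A d d') = Eadd X C' A (Pull X c A d) (Pull X c A d'))) \<and>
     (\<forall>A\<in>Ob X. \<forall>C\<in>Ob X. \<forall>d\<in>Ext X C A. Pull X (Idm X C) A d = d) \<and>
     (\<forall>A\<in>Ob X. \<forall>C C' C'' c c'. c \<in> Hom X C' C \<longrightarrow> c' \<in> Hom X C'' C' \<longrightarrow>
        (\<forall>d\<in>Ext X C A. Pull X (Cmp X c c') A d = Pull X c' A (Pull X c A d))) \<and>
     (\<forall>A\<in>Ob X. \<forall>C C' c c'. c \<in> Hom X C' C \<longrightarrow> c' \<in> Hom X C' C \<longrightarrow>
        (\<forall>d\<in>Ext X C A. Pull X (Madd X c c') A d = Eadd X C' A (Pull X c A d) (Pull X c' A d))) \<and>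
     \<comment> \<open>covariant part E(C,-)\<close>
     (\<forall>C\<in>Ob X. \<forall>A A' a. a \<in> Hom X A A' \<longrightarrow>
        (\<forall>d\<in>Ext X C A. Push X C a d \<in> Ext X C A') \<and>
        (\<forall>d\<in>Ext X C A. \<forall>d'\<in>Ext X C A.
           Push X C a (Eadd X C A d d') = Eadd X C A' (Push X C a d) (Push X C a d'))) \<and>
     (\<forall>A\<in>Ob X. \<forall>C\<in>Ob X. \<forall>d\<in>Ext X C A. Push X C (Idm X A) d = d) \<and>
     (\<forall>C\<in>Ob X. \<forall>A A' A'' a a'. a \<in> Hom X A A' \<longrightarrow> a' \<in> Hom X A' A'' \<longrightarrow>
        (\<forall>d\<in>Ext X C A. Push X C (Cmp X a' a) d = Push X C a' (Push X C a d))) \<and>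
     (\<forall>C\<in>Ob X. \<forall>A A' a a'. a \<in> Hom X A A' \<longrightarrow> a' \<in> Hom X A A' \<longrightarrow>
        (\<forall>d\<in>Ext X C A. Push X C (Madd X a a') d = Eadd X C A' (Push X C a d) (Push X C a' d))) \<and>
     \<comment> \<open>bifunctoriality\<close>
     (\<forall>A A' C C' a c. a \<in> Hom X A A' \<longrightarrow> c \<in> Hom X C' C \<longrightarrow>
        (\<forall>d\<in>Ext X C A. Push X C' a (Pull X c A d) = Pull X c A' (Push X C a d)))"

definition seq_equiv :: "('o,'m,'e,'z) extcat_scheme \<Rightarrow> 'm \<Rightarrow> 'm \<Rightarrow> 'm \<Rightarrow> 'm \<Rightarrow> bool" where
  "seq_equiv X x y x' y' \<longleftrightarrow>
     x' \<in> Mor X \<and> y' \<in> Mor X \<and> Dom X x' = Dom X x \<and> Cod X y' = Cod X y \<and>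
     Cod X x' = Dom X y' \<and>
     (\<exists>b\<in>Hom X (Cod X x) (Cod X x'). iso X b \<and> Cmp X b x = x' \<and> Cmp X y' b = y)"

definition ET2 :: "('o,'m,'e,'z) extcat_scheme \<Rightarrow> bool" where
  "ET2 X \<longleftrightarrow>
     \<comment> \<open>s(delta) consists of sequences A -> B -> C\<close>
     (\<forall>C A d x y. Rlz X C A d x y \<longrightarrow>
        C \<in> Ob X \<and> A \<in> Ob X \<and> d \<in> Ext X C A \<and> x \<in> Mor X \<and> y \<in> Mor X \<and>
        Dom X x = A \<and> Cod X y = C \<and> Cod X x = Dom X y) \<and>
     \<comment> \<open>s(delta) is an equivalence class of such sequences\<close>
     (\<forall>C\<in>Ob X. \<forall>A\<in>Ob X. \<forall>d\<in>Ext X C A. \<exists>x y. Rlz X C A d x y) \<and>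
     (\<forall>C A d x y x' y'. Rlz X C A d x y \<longrightarrow> (Rlz X C A d x' y' \<longleftrightarrow> seq_equiv X x y x' y')) \<and>
     \<comment> \<open>realisation of morphisms of extensions\<close>
     (\<forall>C A C' A' d d' a c x y x' y'.
        Rlz X C A d x y \<longrightarrow> Rlz X C' A' d' x' y' \<longrightarrow>
        a \<in> Hom X A A' \<longrightarrow> c \<in> Hom X C C' \<longrightarrow> Push X C a d = Pull X c A' d' \<longrightarrow>
        (\<exists>b\<in>Hom X (Cod X x) (Cod X x'). Cmp X b x = Cmp X x' a \<and> Cmp X y' b = Cmp X c y)) \<and>
     \<comment> \<open>additivity: s(0) is the split sequence\<close>
     (\<forall>A\<in>Ob X. \<forall>C\<in>Ob X. \<forall>S i1 i2 p1 p2. biproduct X A C S i1 i2 p1 p2 \<longrightarrow>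
        Rlz X C A (Ezero X C A) i1 p2) \<and>
     \<comment> \<open>additivity: s(delta + delta') = s(delta) + s(delta')\<close>
     (\<forall>C A d x y C' A' d' x' y' SA iA iA' pA pA' SB iB iB' pB pB' SC iC iC' pC pC'.
        Rlz X C A d x y \<longrightarrow> Rlz X C' A' d' x' y' \<longrightarrow>
        biproduct X A A' SA iA iA' pA pA' \<longrightarrow>
        biproduct X (Cod X x) (Cod X x') SB iB iB' pB pB' \<longrightarrow>
        biproduct X C C' SC iC iC' pC pC' \<longrightarrow>
        Rlz X SC SA
          (Eadd X SC SA (Push X SC iA (Pull X pC A d)) (Push X SC iA' (Pull X pC' A' d')))
          (Madd X (Cmp X iB (Cmp X x pA)) (Cmp X iB' (Cmp X x' pA')))
          (Madd X (Cmp X iC (Cmp X y pB)) (Cmp X iC' (Cmp X y' pB'))))"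

definition ET3 :: "('o,'m,'e,'z) extcat_scheme \<Rightarrow> bool" where
  "ET3 X \<longleftrightarrow>
     (\<forall>C A C' A' d d' x y x' y' a b.
        Rlz X C A d x y \<longrightarrow> Rlz X C' A' d' x' y' \<longrightarrow>
        a \<in> Hom X A A' \<longrightarrow> b \<in> Hom X (Cod X x) (Cod X x') \<longrightarrow> Cmp X b x = Cmp X x' a \<longrightarrow>
        (\<exists>c\<in>Hom X C C'. Cmp X c y = Cmp X y' b \<and> Push X C a d = Pull X c A' d'))"

definition ET3op :: "('o,'m,'e,'z) extcat_scheme \<Rightarrow> bool" where
  "ET3op X \<longleftrightarrow>
     (\<forall>C A C' A' d d' x y x' y' b c.
        Rlz X C A d x y \<longrightarrow> Rlz X C' A' d' x' y' \<longrightarrow>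
        b \<in> Hom X (Cod X x) (Cod X x') \<longrightarrow> c \<in> Hom X C C' \<longrightarrow> Cmp X y' b = Cmp X c y \<longrightarrow>
        (\<exists>a\<in>Hom X A A'. Cmp X x' a = Cmp X b x \<and> Push X C a d = Pull X c A' d'))"

definition ET4 :: "('o,'m,'e,'z) extcat_scheme \<Rightarrow> bool" where
  "ET4 X \<longleftrightarrow>
     (\<forall>A B D F d d' f f' g g'.
        Rlz X D A d f f' \<longrightarrow> Rlz X F B d' g g' \<longrightarrow> Cod X f = B \<longrightarrow>
        (\<exists>E\<in>Ob X. \<exists>h'\<in>Hom X (Cod X g) E. \<exists>dd\<in>Hom X D E. \<exists>e\<in>Hom X E F. \<exists>d''\<in>Ext X E A.
           Rlz X E A d'' (Cmp X g f) h' \<and>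
           Cmp X h' g = Cmp X dd f' \<and> Cmp X e h' = g' \<and>
           Rlz X F D (Push X F f' d') dd e \<and>
           Pull X dd A d'' = d \<and>
           Push X E f d'' = Pull X e B d'))"

definition ET4op :: "('o,'m,'e,'z) extcat_scheme \<Rightarrow> bool" where
  "ET4op X \<longleftrightarrow>
     (\<forall>A B D F d d' f f' g g'.
        Rlz X A D d f' f \<longrightarrow> Rlz X B F d' g' g \<longrightarrow> Dom X f = B \<longrightarrow>
        (\<exists>E\<in>Ob X. \<exists>h'\<in>Hom X E (Dom X g). \<exists>dd\<in>Hom X E D. \<exists>e\<in>Hom X F E. \<exists>d''\<in>Ext X A E.
           Rlz X A E d'' h' (Cmp X f g) \<and>
           Cmp X g h' = Cmp X f' dd \<and> Cmp X h' e = g' \<and>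
           Rlz X D F (Pull X f' F d') e dd \<and>
           Push X A dd d'' = d \<and>
           Pull X f E d'' = Push X B e d'))"

definition extriangulated :: "('o,'m,'e,'z) extcat_scheme \<Rightarrow> bool" where
  "extriangulated X \<longleftrightarrow> is_additive X \<and> ET1 X \<and> ET2 X \<and> ET3 X \<and> ET3op X \<and> ET4 X \<and> ET4op X"

definition restr :: "('o,'m,'e,'z) extcat_scheme \<Rightarrow> ('o \<Rightarrow> 'o \<Rightarrow> 'e set) \<Rightarrow> ('o,'m,'e,'z) extcat_scheme" where
  "restr X F = X\<lparr>Ext := F, Rlz := (\<lambda>C A d x y. d \<in> F C A \<and> Rlz X C A d x y)\<rparr>"

definition external_triangulation :: "('o,'m,'e,'z) extcat_scheme \<Rightarrow> ('o \<Rightarrow> 'o \<Rightarrow> 'e set) \<Rightarrow> bool" where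
  "external_triangulation X F \<longleftrightarrow> extriangulated (restr X F)"

definition D_monic :: "('o,'m,'e,'z) extcat_scheme \<Rightarrow> 'o set \<Rightarrow> 'm \<Rightarrow> bool" where
  "D_monic X D f \<longleftrightarrow> (\<forall>Y\<in>D. \<forall>g\<in>Hom X (Dom X f) Y. \<exists>h\<in>Hom X (Cod X f) Y. Cmp X h f = g)"

definition D_epic :: "('o,'m,'e,'z) extcat_scheme \<Rightarrow> 'o set \<Rightarrow> 'm \<Rightarrow> bool" where
  "D_epic X D f \<longleftrightarrow> (\<forall>Y\<in>D. \<forall>g\<in>Hom X Y (Cod X f). \<exists>h\<in>Hom X Y (Dom X f). Cmp X f h = g)"

definition left_approx :: "('o,'m,'e,'z) extcat_scheme \<Rightarrow> 'o set \<Rightarrow> 'o \<Rightarrow> 'm \<Rightarrow> bool" where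
  "left_approx X D A f \<longleftrightarrow> f \<in> Mor X \<and> Dom X f = A \<and> Cod X f \<in> D \<and> D_monic X D f"

definition right_approx :: "('o,'m,'e,'z) extcat_scheme \<Rightarrow> 'o set \<Rightarrow> 'o \<Rightarrow> 'm \<Rightarrow> bool" where
  "right_approx X D A f \<longleftrightarrow> f \<in> Mor X \<and> Cod X f = A \<and> Dom X f \<in> D \<and> D_epic X D f"

definition covariantly_finite :: "('o,'m,'e,'z) extcat_scheme \<Rightarrow> 'o set \<Rightarrow> bool" where
  "covariantly_finite X D \<longleftrightarrow> (\<forall>A\<in>Ob X. \<exists>f. left_approx X D A f)"

definition contravariantly_finite :: "('o,'m,'e,'z) extcat_scheme \<Rightarrow> 'o set \<Rightarrow> bool" where
  "contravariantly_finite X D \<longleftrightarrow> (\<forall>A\<in>Ob X. \<exists>f. right_approx X D A f)"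

definition functorially_finite :: "('o,'m,'e,'z) extcat_scheme \<Rightarrow> 'o set \<Rightarrow> bool" where
  "functorially_finite X D \<longleftrightarrow> covariantly_finite X D \<and> contravariantly_finite X D"

definition inflation :: "('o,'m,'e,'z) extcat_scheme \<Rightarrow> 'm \<Rightarrow> bool" where
  "inflation X x \<longleftrightarrow> (\<exists>C A d y. Rlz X C A d x y)"

definition deflation :: "('o,'m,'e,'z) extcat_scheme \<Rightarrow> 'm \<Rightarrow> bool" where
  "deflation X y \<longleftrightarrow> (\<exists>C A d x. Rlz X C A d x y)"

definition IExt :: "('o,'m,'e,'z) extcat_scheme \<Rightarrow> 'o set \<Rightarrow> 'o \<Rightarrow> 'o \<Rightarrow> 'e set" where
  "IExt X D C A = {d \<in> Ext X C A. \<exists>x y. Rlz X C A d x y \<and> D_monic X D x}"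

definition PExt :: "('o,'m,'e,'z) extcat_scheme \<Rightarrow> 'o set \<Rightarrow> 'o \<Rightarrow> 'o \<Rightarrow> 'e set" where
  "PExt X D C A = {d \<in> Ext X C A. \<exists>x y. Rlz X C A d x y \<and> D_epic X D y}"

definition DExt :: "('o,'m,'e,'z) extcat_scheme \<Rightarrow> 'o set \<Rightarrow> 'o \<Rightarrow> 'o \<Rightarrow> 'e set" where
  "DExt X D C A = IExt X D C A \<inter> PExt X D C A"

definition Inj :: "('o,'m,'e,'z) extcat_scheme \<Rightarrow> ('o \<Rightarrow> 'o \<Rightarrow> 'e set) \<Rightarrow> 'o set" where
  "Inj X F = {I \<in> Ob X. \<forall>C\<in>Ob X. F C I = {Ezero X C I}}"

definition Proj :: "('o,'m,'e,'z) extcat_scheme \<Rightarrow> ('o \<Rightarrow> 'o \<Rightarrow> 'e set) \<Rightarrow> 'o set" where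
  "Proj X F = {P \<in> Ob X. \<forall>A\<in>Ob X. F P A = {Ezero X P A}}"

definition enough_inj :: "('o,'m,'e,'z) extcat_scheme \<Rightarrow> ('o \<Rightarrow> 'o \<Rightarrow> 'e set) \<Rightarrow> bool" where
  "enough_inj X F \<longleftrightarrow> (\<forall>A\<in>Ob X. \<exists>C d x y.
      d \<in> F C A \<and> Rlz X C A d x y \<and> Cod X x \<in> Inj X F)"

definition enough_proj :: "('o,'m,'e,'z) extcat_scheme \<Rightarrow> ('o \<Rightarrow> 'o \<Rightarrow> 'e set) \<Rightarrow> bool" where
  "enough_proj X F \<longleftrightarrow> (\<forall>C\<in>Ob X. \<exists>A d x y.
      d \<in> F C A \<and> Rlz X C A d x y \<and> Dom X y \<in> Proj X F)"

definition is_direct_sum :: "('o,'m,'e,'z) extcat_scheme \<Rightarrow> 'i set \<Rightarrow> ('i \<Rightarrow> 'o) \<Rightarrow> 'o \<Rightarrow> ('i \<Rightarrow> 'm) \<Rightarrow> bool" where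
  "is_direct_sum X I Fm S iota \<longleftrightarrow> S \<in> Ob X \<and> (\<forall>i\<in>I. Fm i \<in> Ob X \<and> iota i \<in> Hom X (Fm i) S) \<and>
     (\<forall>T\<in>Ob X. \<forall>g. (\<forall>i\<in>I. g i \<in> Hom X (Fm i) T) \<longrightarrow>
        (\<exists>h\<in>Hom X S T. (\<forall>i\<in>I. Cmp X h (iota i) = g i) \<and>
           (\<forall>h'\<in>Hom X S T. (\<forall>i\<in>I. Cmp X h' (iota i) = g i) \<longrightarrow> h' = h)))"

text \<open>Closure under all existing direct sums of families indexed by sets of the type 'i.\<close>
definition closed_under_sums :: "'i itself \<Rightarrow> ('o,'m,'e,'z) extcat_scheme \<Rightarrow> 'o set \<Rightarrow> bool" where
  "closed_under_sums _ X D \<longleftrightarrow>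
     (\<forall>(I::'i set) Fm S iota. (\<forall>i\<in>I. Fm i \<in> D) \<longrightarrow> is_direct_sum X I Fm S iota \<longrightarrow> S \<in> D)"

definition closed_under_summands :: "('o,'m,'e,'z) extcat_scheme \<Rightarrow> 'o set \<Rightarrow> bool" where
  "closed_under_summands X D \<longleftrightarrow>
     (\<forall>S\<in>D. \<forall>A1 A2 i1 i2 p1 p2. biproduct X A1 A2 S i1 i2 p1 p2 \<longrightarrow> A1 \<in> D)"

end

theory Submission
  imports Defs
begin

text \<open>Realise \<open>\<delta> \<in> E(C,A)\<close> as \<open>A -x\<rightarrow> B -y\<rightarrow> C\<close>. Comparing with split extriangles
  through (ET2), (ET3) and (ET3)\<open>^op\<close> shows that \<open>a : A \<rightarrow> Y\<close> factors through \<open>x\<close> iff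
  \<open>a\<^sub>* \<delta> = 0\<close>, and dually for \<open>y\<close>. So \<open>x\<close> is \<open>D\<close>-monic iff \<open>\<delta>\<close> is killed by every
  \<open>a : A \<rightarrow> Y\<close> with \<open>Y \<in> D\<close>; this description makes \<open>I\<^sub>D\<close> a subfunctor of \<open>E\<close> (dually
  \<open>P\<^sub>D\<close>, and \<open>D\<^sub>D\<close> as their intersection). Restricting the realisation to such a
  subfunctor gives an external triangulation once the extension produced by (ET4) and
  (ET4)\<open>^op\<close> stays in it: for \<open>I\<^sub>D\<close> this is closure of \<open>D\<close>-monics under composition, for
  \<open>P\<^sub>D\<close> a diagram chase through a weak kernel.

  An \<open>I\<^sub>D\<close>-injective object \<open>I\<close> has the extriangle of its left \<open>D\<close>-approximation
  \<open>I \<rightarrow> D\<^sub>0\<close> in \<open>I\<^sub>D\<close>, so it splits and \<open>I\<close> is a summand of \<open>D\<^sub>0\<close>.\<close>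

lemma restr_simps [simp]:
  "Ob (restr X F) = Ob X" "Mor (restr X F) = Mor X" "Dom (restr X F) = Dom X"
  "Cod (restr X F) = Cod X" "Cmp (restr X F) = Cmp X" "Idm (restr X F) = Idm X"
  "Madd (restr X F) = Madd X" "Mneg (restr X F) = Mneg X" "Mzero (restr X F) = Mzero X"
  "Ext (restr X F) = F" "Eadd (restr X F) = Eadd X" "Eneg (restr X F) = Eneg X"
  "Ezero (restr X F) = Ezero X" "Pull (restr X F) = Pull X" "Push (restr X F) = Push X"
  "Rlz (restr X F) = (\<lambda>C A d x y. d \<in> F C A \<and> Rlz X C A d x y)"
  by (simp_all add: restr_def)

lemma restr_Hom [simp]: "Hom (restr X F) = Hom X"
  by (intro ext) (simp add: Hom_def)

lemma restr_biproduct [simp]: "biproduct (restr X F) = biproduct X"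
  by (intro ext) (simp add: biproduct_def)

lemma restr_seq_equiv [simp]: "seq_equiv (restr X F) = seq_equiv X"
  by (intro ext) (simp add: seq_equiv_def iso_def)

lemma restr_is_additive [simp]: "is_additive (restr X F) = is_additive X"
  by (simp add: is_additive_def is_preadditive_def is_category_def)

definition subfunctor :: "('o,'m,'e,'z) extcat_scheme \<Rightarrow> ('o \<Rightarrow> 'o \<Rightarrow> 'e set) \<Rightarrow> bool" where
  "subfunctor X F \<longleftrightarrow>
     (\<forall>C A. F C A \<subseteq> Ext X C A) \<and>
     (\<forall>C\<in>Ob X. \<forall>A\<in>Ob X. Ezero X C A \<in> F C A) \<and>
     (\<forall>C A d d'. d \<in> F C A \<longrightarrow> d' \<in> F C A \<longrightarrow> Eadd X C A d d' \<in> F C A) \<and>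
     (\<forall>C A d. d \<in> F C A \<longrightarrow> Eneg X C A d \<in> F C A) \<and>
     (\<forall>C C' A c d. c \<in> Hom X C' C \<longrightarrow> d \<in> F C A \<longrightarrow> Pull X c A d \<in> F C' A) \<and>
     (\<forall>C A A' a d. a \<in> Hom X A A' \<longrightarrow> d \<in> F C A \<longrightarrow> Push X C a d \<in> F C A')"

text \<open>The hypotheses are the data that (ET4) produces from two \<open>F\<close>-extensions. Only the
  extension \<open>d''\<close> of the composite inflation has to be required in \<open>F\<close>: the other new
  extension is a push-forward of \<open>d'\<close>.\<close>
definition ET4_closed :: "('o,'m,'e,'z) extcat_scheme \<Rightarrow> ('o \<Rightarrow> 'o \<Rightarrow> 'e set) \<Rightarrow> bool" where
  "ET4_closed X F \<longleftrightarrow>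
     (\<forall>A B C C' E d d' d'' f f' g g' h' c e.
        d \<in> F C A \<longrightarrow> Rlz X C A d f f' \<longrightarrow> d' \<in> F C' B \<longrightarrow> Rlz X C' B d' g g' \<longrightarrow>
        Cod X f = B \<longrightarrow> h' \<in> Hom X (Cod X g) E \<longrightarrow> c \<in> Hom X C E \<longrightarrow> e \<in> Hom X E C' \<longrightarrow>
        Rlz X E A d'' (Cmp X g f) h' \<longrightarrow> Cmp X h' g = Cmp X c f' \<longrightarrow> Cmp X e h' = g' \<longrightarrow>
        Rlz X C' C (Push X C' f' d') c e \<longrightarrow> d'' \<in> F E A)"

definition ET4op_closed :: "('o,'m,'e,'z) extcat_scheme \<Rightarrow> ('o \<Rightarrow> 'o \<Rightarrow> 'e set) \<Rightarrow> bool" where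
  "ET4op_closed X F \<longleftrightarrow>
     (\<forall>A B C C' E d d' d'' f f' g g' h' c e.
        d \<in> F A C \<longrightarrow> Rlz X A C d f' f \<longrightarrow> d' \<in> F B C' \<longrightarrow> Rlz X B C' d' g' g \<longrightarrow>
        Dom X f = B \<longrightarrow> h' \<in> Hom X E (Dom X g) \<longrightarrow> c \<in> Hom X E C \<longrightarrow> e \<in> Hom X C' E \<longrightarrow>
        Rlz X A E d'' h' (Cmp X f g) \<longrightarrow> Cmp X g h' = Cmp X f' c \<longrightarrow> Cmp X h' e = g' \<longrightarrow>
        Rlz X C C' (Pull X f' C' d') e c \<longrightarrow> d'' \<in> F A E)"

lemma
  assumes "subfunctor X F"
  shows subfunctor_Ext: "F C A \<subseteq> Ext X C A"
    and subfunctor_Ezero: "C \<in> Ob X \<Longrightarrow> A \<in> Ob X \<Longrightarrow> Ezero X C A \<in> F C A"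
    and subfunctor_Eadd: "d \<in> F C A \<Longrightarrow> d' \<in> F C A \<Longrightarrow> Eadd X C A d d' \<in> F C A"
    and subfunctor_Eneg: "d \<in> F C A \<Longrightarrow> Eneg X C A d \<in> F C A"
    and subfunctor_Pull: "c \<in> Hom X C' C \<Longrightarrow> d \<in> F C A \<Longrightarrow> Pull X c A d \<in> F C' A"
    and subfunctor_Push: "a \<in> Hom X A A' \<Longrightarrow> d \<in> F C A \<Longrightarrow> Push X C a d \<in> F C A'"
  using assms by (simp_all add: subfunctor_def)

lemma ET4_closedD:
  assumes "ET4_closed X F" and "d \<in> F C A" "Rlz X C A d f f'" "d' \<in> F C' B" "Rlz X C' B d' g g'"
    "Cod X f = B" "h' \<in> Hom X (Cod X g) E" "c \<in> Hom X C E" "e \<in> Hom X E C'"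
    "Rlz X E A d'' (Cmp X g f) h'" "Cmp X h' g = Cmp X c f'" "Cmp X e h' = g'"
    "Rlz X C' C (Push X C' f' d') c e"
  shows "d'' \<in> F E A"
  using assms(1)[unfolded ET4_closed_def, rule_format, OF assms(2-)] .

lemma ET4op_closedD:
  assumes "ET4op_closed X F" and "d \<in> F A C" "Rlz X A C d f' f" "d' \<in> F B C'" "Rlz X B C' d' g' g"
    "Dom X f = B" "h' \<in> Hom X E (Dom X g)" "c \<in> Hom X E C" "e \<in> Hom X C' E"
    "Rlz X A E d'' h' (Cmp X f g)" "Cmp X g h' = Cmp X f' c" "Cmp X h' e = g'"
    "Rlz X C C' (Pull X f' C' d') e c"
  shows "d'' \<in> F A E"
  using assms(1)[unfolded ET4op_closed_def, rule_format, OF assms(2-)] .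

lemma subfunctor_Int:
  assumes "subfunctor X F" "subfunctor X G"
  shows "subfunctor X (\<lambda>C A. F C A \<inter> G C A)"
  using assms unfolding subfunctor_def by (simp add: le_infI1)

lemma ET4_closed_Int:
  assumes F: "ET4_closed X F" and G: "ET4_closed X G"
  shows "ET4_closed X (\<lambda>C A. F C A \<inter> G C A)"
  unfolding ET4_closed_def
proof (intro allI impI)
  fix A B C C' E d d' d'' f f' g g' h' c e
  assume d: "d \<in> F C A \<inter> G C A" and r: "Rlz X C A d f f'"
    and d': "d' \<in> F C' B \<inter> G C' B" and oct: "Rlz X C' B d' g g'"
    "Cod X f = B" "h' \<in> Hom X (Cod X g) E" "c \<in> Hom X C E" "e \<in> Hom X E C'"
    "Rlz X E A d'' (Cmp X g f) h'" "Cmp X h' g = Cmp X c f'" "Cmp X e h' = g'"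
    "Rlz X C' C (Push X C' f' d') c e"
  show "d'' \<in> F E A \<inter> G E A"
    using ET4_closedD[OF F IntD1[OF d] r IntD1[OF d'] oct]
      ET4_closedD[OF G IntD2[OF d] r IntD2[OF d'] oct] by blast
qed

lemma ET4op_closed_Int:
  assumes F: "ET4op_closed X F" and G: "ET4op_closed X G"
  shows "ET4op_closed X (\<lambda>C A. F C A \<inter> G C A)"
  unfolding ET4op_closed_def
proof (intro allI impI)
  fix A B C C' E d d' d'' f f' g g' h' c e
  assume d: "d \<in> F A C \<inter> G A C" and r: "Rlz X A C d f' f"
    and d': "d' \<in> F B C' \<inter> G B C'" and oct: "Rlz X B C' d' g' g"
    "Dom X f = B" "h' \<in> Hom X E (Dom X g)" "c \<in> Hom X E C" "e \<in> Hom X C' E"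
    "Rlz X A E d'' h' (Cmp X f g)" "Cmp X g h' = Cmp X f' c" "Cmp X h' e = g'"
    "Rlz X C C' (Pull X f' C' d') e c"
  show "d'' \<in> F A E \<inter> G A E"
    using ET4op_closedD[OF F IntD1[OF d] r IntD1[OF d'] oct]
      ET4op_closedD[OF G IntD2[OF d] r IntD2[OF d'] oct] by blast
qed

lemma DExt_eq_Int: "DExt X D = (\<lambda>C A. IExt X D C A \<inter> PExt X D C A)"
  by (intro ext) (simp add: DExt_def)

lemma Inj_antimono:
  assumes "\<And>C A. F C A \<subseteq> G C A" and "\<And>C A. C \<in> Ob X \<Longrightarrow> A \<in> Ob X \<Longrightarrow> Ezero X C A \<in> F C A"
  shows "Inj X G \<subseteq> Inj X F"
  using assms unfolding Inj_def by blast

lemma Proj_antimono: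
  assumes "\<And>C A. F C A \<subseteq> G C A" and "\<And>C A. C \<in> Ob X \<Longrightarrow> A \<in> Ob X \<Longrightarrow> Ezero X C A \<in> F C A"
  shows "Proj X G \<subseteq> Proj X F"
  using assms unfolding Proj_def by blast

locale extriangulated_category =
  fixes X :: "('o,'m,'e,'z) extcat_scheme"
  assumes extriangulated: "extriangulated X"
begin

lemma is_additive: "is_additive X"
  using extriangulated by (simp add: extriangulated_def)

lemma is_preadditive: "is_preadditive X"
  using is_additive by (simp add: is_additive_def)

lemma is_category: "is_category X"
  using is_preadditive by (simp add: is_preadditive_def)

lemma ET1: "ET1 X" and ET2: "ET2 X"
  using extriangulated by (simp_all add: extriangulated_def)

lemma HomD: "f \<in> Hom X A B \<Longrightarrow> A \<in> Ob X \<and> B \<in> Ob X \<and> f \<in> Mor X \<and> Dom X f = A \<and> Cod X f = B"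
  using is_category by (auto simp: is_category_def Hom_def)

lemma comp_Hom: "f \<in> Hom X A B \<Longrightarrow> g \<in> Hom X B C \<Longrightarrow> Cmp X g f \<in> Hom X A C"
  using is_category unfolding is_category_def by blast

lemma comp_assoc: "f \<in> Hom X A B \<Longrightarrow> g \<in> Hom X B C \<Longrightarrow> h \<in> Hom X C D \<Longrightarrow>
    Cmp X h (Cmp X g f) = Cmp X (Cmp X h g) f"
  using is_category unfolding is_category_def by blast

lemma Idm_Hom: "A \<in> Ob X \<Longrightarrow> Idm X A \<in> Hom X A A"
  using is_category unfolding is_category_def by blast

lemma comp_Idm_left: "f \<in> Hom X A B \<Longrightarrow> Cmp X (Idm X B) f = f"
  and comp_Idm_right: "f \<in> Hom X A B \<Longrightarrow> Cmp X f (Idm X A) = f"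
  using is_category unfolding is_category_def by blast+

lemma Hom_abelian_group:
  assumes "A \<in> Ob X" "B \<in> Ob X"
  shows "Mzero X A B \<in> Hom X A B \<and>
    (\<forall>f\<in>Hom X A B. \<forall>g\<in>Hom X A B. Madd X f g \<in> Hom X A B) \<and>
    (\<forall>f\<in>Hom X A B. Mneg X f \<in> Hom X A B) \<and>
    (\<forall>f\<in>Hom X A B. \<forall>g\<in>Hom X A B. \<forall>h\<in>Hom X A B.
        Madd X (Madd X f g) h = Madd X f (Madd X g h)) \<and>
    (\<forall>f\<in>Hom X A B. \<forall>g\<in>Hom X A B. Madd X f g = Madd X g f) \<and>
    (\<forall>f\<in>Hom X A B. Madd X (Mzero X A B) f = f) \<and>
    (\<forall>f\<in>Hom X A B. Madd X (Mneg X f) f = Mzero X A B)"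
  using is_preadditive[unfolded is_preadditive_def, THEN conjunct2, THEN conjunct1] assms by blast

lemma Mzero_Hom: "A \<in> Ob X \<Longrightarrow> B \<in> Ob X \<Longrightarrow> Mzero X A B \<in> Hom X A B"
  using Hom_abelian_group by blast

lemma Madd_Hom: "f \<in> Hom X A B \<Longrightarrow> g \<in> Hom X A B \<Longrightarrow> Madd X f g \<in> Hom X A B"
  and Mneg_Hom: "f \<in> Hom X A B \<Longrightarrow> Mneg X f \<in> Hom X A B"
  and Madd_assoc: "f \<in> Hom X A B \<Longrightarrow> g \<in> Hom X A B \<Longrightarrow> h \<in> Hom X A B \<Longrightarrow>
    Madd X (Madd X f g) h = Madd X f (Madd X g h)"
  and Madd_commute: "f \<in> Hom X A B \<Longrightarrow> g \<in> Hom X A B \<Longrightarrow> Madd X f g = Madd X g f"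
  and Madd_Mzero_left: "f \<in> Hom X A B \<Longrightarrow> Madd X (Mzero X A B) f = f"
  and Madd_Mneg_left: "f \<in> Hom X A B \<Longrightarrow> Madd X (Mneg X f) f = Mzero X A B"
  by (meson Hom_abelian_group HomD)+

lemma comp_distrib_right: "f \<in> Hom X A B \<Longrightarrow> g \<in> Hom X B C \<Longrightarrow> g' \<in> Hom X B C \<Longrightarrow>
    Cmp X (Madd X g g') f = Madd X (Cmp X g f) (Cmp X g' f)"
  and comp_distrib_left: "f \<in> Hom X A B \<Longrightarrow> f' \<in> Hom X A B \<Longrightarrow> g \<in> Hom X B C \<Longrightarrow>
    Cmp X g (Madd X f f') = Madd X (Cmp X g f) (Cmp X g f')"
  using is_preadditive unfolding is_preadditive_def by blast+

lemma Madd_Mzero_right: "f \<in> Hom X A B \<Longrightarrow> Madd X f (Mzero X A B) = f"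
  using Madd_commute Madd_Mzero_left Mzero_Hom HomD by metis

lemma Madd_Mneg_cancel_left:
  assumes m: "m \<in> Hom X A B" and t: "t \<in> Hom X A B"
  shows "Madd X m (Madd X (Mneg X m) t) = t"
proof -
  have n: "Mneg X m \<in> Hom X A B" using m by (rule Mneg_Hom)
  have "Madd X m (Madd X (Mneg X m) t) = Madd X (Madd X (Mneg X m) m) t"
    using Madd_assoc[OF m n t] Madd_commute[OF m n] by simp
  also have "\<dots> = t" using m t by (simp add: Madd_Mneg_left Madd_Mzero_left)
  finally show ?thesis .
qed

lemma Madd_idem_imp_Mzero:
  assumes f: "f \<in> Hom X A B" and idem: "Madd X f f = f"
  shows "f = Mzero X A B"
proof -
  have n: "Mneg X f \<in> Hom X A B" using f by (rule Mneg_Hom)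
  have "f = Madd X (Madd X (Mneg X f) f) f"
    using f by (simp add: Madd_Mneg_left Madd_Mzero_left)
  also have "\<dots> = Madd X (Mneg X f) (Madd X f f)" using Madd_assoc[OF n f f] .
  also have "\<dots> = Mzero X A B" using f idem by (simp add: Madd_Mneg_left)
  finally show ?thesis .
qed

lemma comp_Mzero_right:
  assumes g: "g \<in> Hom X B C" and A: "A \<in> Ob X"
  shows "Cmp X g (Mzero X A B) = Mzero X A C"
proof -
  have z: "Mzero X A B \<in> Hom X A B" using Mzero_Hom A HomD g by blast
  then have "Cmp X g (Mzero X A B) = Madd X (Cmp X g (Mzero X A B)) (Cmp X g (Mzero X A B))"
    using g by (metis Madd_Mzero_left comp_distrib_left)
  then show ?thesis using Madd_idem_imp_Mzero comp_Hom z g by metis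
qed

lemma comp_Mzero_left:
  assumes f: "f \<in> Hom X A B" and C: "C \<in> Ob X"
  shows "Cmp X (Mzero X B C) f = Mzero X A C"
proof -
  have z: "Mzero X B C \<in> Hom X B C" using Mzero_Hom C HomD f by blast
  then have "Cmp X (Mzero X B C) f = Madd X (Cmp X (Mzero X B C) f) (Cmp X (Mzero X B C) f)"
    using f by (metis Madd_Mzero_left comp_distrib_right)
  then show ?thesis using Madd_idem_imp_Mzero comp_Hom z f by metis
qed

lemma comp_Madd_Mneg_eq_Mzero_left:
  assumes e: "e \<in> Hom X B C" and m: "m \<in> Hom X A B" and t: "t \<in> Hom X A B"
    and eq: "Cmp X e m = Cmp X e t"
  shows "Cmp X e (Madd X (Mneg X m) t) = Mzero X A C"
proof -
  have "Cmp X e (Madd X (Mneg X m) t) = Cmp X e (Madd X (Mneg X m) m)"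
    using comp_distrib_left[OF Mneg_Hom[OF m] t e] comp_distrib_left[OF Mneg_Hom[OF m] m e] eq
    by simp
  also have "\<dots> = Mzero X A C"
    using e m HomD by (simp add: Madd_Mneg_left comp_Mzero_right)
  finally show ?thesis .
qed

lemma comp_Madd_Mneg_eq_Mzero_right:
  assumes e: "e \<in> Hom X A B" and m: "m \<in> Hom X B C" and t: "t \<in> Hom X B C"
    and eq: "Cmp X m e = Cmp X t e"
  shows "Cmp X (Madd X (Mneg X m) t) e = Mzero X A C"
proof -
  have "Cmp X (Madd X (Mneg X m) t) e = Cmp X (Madd X (Mneg X m) m) e"
    using comp_distrib_right[OF e Mneg_Hom[OF m] t] comp_distrib_right[OF e Mneg_Hom[OF m] m] eq
    by simp
  also have "\<dots> = Mzero X A C"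
    using e m HomD by (simp add: Madd_Mneg_left comp_Mzero_left)
  finally show ?thesis .
qed

lemma Ext_abelian_group:
  assumes "C \<in> Ob X" "A \<in> Ob X"
  shows "Ezero X C A \<in> Ext X C A \<and>
    (\<forall>d\<in>Ext X C A. \<forall>d'\<in>Ext X C A. Eadd X C A d d' \<in> Ext X C A) \<and>
    (\<forall>d\<in>Ext X C A. Eneg X C A d \<in> Ext X C A) \<and>
    (\<forall>d\<in>Ext X C A. \<forall>d'\<in>Ext X C A. \<forall>d''\<in>Ext X C A.
       Eadd X C A (Eadd X C A d d') d'' = Eadd X C A d (Eadd X C A d' d'')) \<and>
    (\<forall>d\<in>Ext X C A. \<forall>d'\<in>Ext X C A. Eadd X C A d d' = Eadd X C A d' d) \<and>
    (\<forall>d\<in>Ext X C A. Eadd X C A (Ezero X C A) d = d) \<and>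
    (\<forall>d\<in>Ext X C A. Eadd X C A (Eneg X C A d) d = Ezero X C A)"
  using ET1[unfolded ET1_def, THEN conjunct1] assms by blast

lemma Ezero_Ext: "C \<in> Ob X \<Longrightarrow> A \<in> Ob X \<Longrightarrow> Ezero X C A \<in> Ext X C A"
  and Eadd_Ext: "C \<in> Ob X \<Longrightarrow> A \<in> Ob X \<Longrightarrow> d \<in> Ext X C A \<Longrightarrow> d' \<in> Ext X C A \<Longrightarrow>
    Eadd X C A d d' \<in> Ext X C A"
  and Eneg_Ext: "C \<in> Ob X \<Longrightarrow> A \<in> Ob X \<Longrightarrow> d \<in> Ext X C A \<Longrightarrow> Eneg X C A d \<in> Ext X C A"
  and Eadd_assoc: "C \<in> Ob X \<Longrightarrow> A \<in> Ob X \<Longrightarrow> d \<in> Ext X C A \<Longrightarrow> d' \<in> Ext X C A \<Longrightarrow>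
    d'' \<in> Ext X C A \<Longrightarrow> Eadd X C A (Eadd X C A d d') d'' = Eadd X C A d (Eadd X C A d' d'')"
  and Eadd_commute: "C \<in> Ob X \<Longrightarrow> A \<in> Ob X \<Longrightarrow> d \<in> Ext X C A \<Longrightarrow> d' \<in> Ext X C A \<Longrightarrow>
    Eadd X C A d d' = Eadd X C A d' d"
  and Eadd_Ezero_left: "C \<in> Ob X \<Longrightarrow> A \<in> Ob X \<Longrightarrow> d \<in> Ext X C A \<Longrightarrow>
    Eadd X C A (Ezero X C A) d = d"
  and Eadd_Eneg_left: "C \<in> Ob X \<Longrightarrow> A \<in> Ob X \<Longrightarrow> d \<in> Ext X C A \<Longrightarrow>
    Eadd X C A (Eneg X C A d) d = Ezero X C A"
  by (meson Ext_abelian_group)+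

lemma Eadd_Ezero_right: "C \<in> Ob X \<Longrightarrow> A \<in> Ob X \<Longrightarrow> d \<in> Ext X C A \<Longrightarrow>
    Eadd X C A d (Ezero X C A) = d"
  using Eadd_commute Eadd_Ezero_left Ezero_Ext by metis

lemma Eadd_idem_imp_Ezero:
  assumes C: "C \<in> Ob X" and A: "A \<in> Ob X" and d: "d \<in> Ext X C A" and idem: "Eadd X C A d d = d"
  shows "d = Ezero X C A"
proof -
  have n: "Eneg X C A d \<in> Ext X C A" using C A d by (rule Eneg_Ext)
  have "d = Eadd X C A (Eadd X C A (Eneg X C A d) d) d"
    using C A d by (simp add: Eadd_Eneg_left Eadd_Ezero_left)
  also have "\<dots> = Eadd X C A (Eneg X C A d) (Eadd X C A d d)" using Eadd_assoc[OF C A n d d] .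
  also have "\<dots> = Ezero X C A" using C A d idem by (simp add: Eadd_Eneg_left)
  finally show ?thesis .
qed

lemma Pull_Ext: "c \<in> Hom X C' C \<Longrightarrow> A \<in> Ob X \<Longrightarrow> d \<in> Ext X C A \<Longrightarrow> Pull X c A d \<in> Ext X C' A"
  using ET1 unfolding ET1_def by simp

lemma Pull_Eadd: "c \<in> Hom X C' C \<Longrightarrow> A \<in> Ob X \<Longrightarrow> d \<in> Ext X C A \<Longrightarrow> d' \<in> Ext X C A \<Longrightarrow>
    Pull X c A (Eadd X C A d d') = Eadd X C' A (Pull X c A d) (Pull X c A d')"
  using ET1 unfolding ET1_def by simp

lemma Pull_Idm: "C \<in> Ob X \<Longrightarrow> A \<in> Ob X \<Longrightarrow> d \<in> Ext X C A \<Longrightarrow> Pull X (Idm X C) A d = d"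
  using ET1 unfolding ET1_def by simp

lemma Pull_comp: "c \<in> Hom X C' C \<Longrightarrow> c' \<in> Hom X C'' C' \<Longrightarrow> A \<in> Ob X \<Longrightarrow> d \<in> Ext X C A \<Longrightarrow>
    Pull X (Cmp X c c') A d = Pull X c' A (Pull X c A d)"
  using ET1 unfolding ET1_def by simp

lemma Pull_Madd: "c \<in> Hom X C' C \<Longrightarrow> c' \<in> Hom X C' C \<Longrightarrow> A \<in> Ob X \<Longrightarrow> d \<in> Ext X C A \<Longrightarrow>
    Pull X (Madd X c c') A d = Eadd X C' A (Pull X c A d) (Pull X c' A d)"
  using ET1 unfolding ET1_def by simp

lemma Push_Ext: "a \<in> Hom X A A' \<Longrightarrow> C \<in> Ob X \<Longrightarrow> d \<in> Ext X C A \<Longrightarrow> Push X C a d \<in> Ext X C A'"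
  using ET1 unfolding ET1_def by simp

lemma Push_Eadd: "a \<in> Hom X A A' \<Longrightarrow> C \<in> Ob X \<Longrightarrow> d \<in> Ext X C A \<Longrightarrow> d' \<in> Ext X C A \<Longrightarrow>
    Push X C a (Eadd X C A d d') = Eadd X C A' (Push X C a d) (Push X C a d')"
  using ET1 unfolding ET1_def by simp

lemma Push_Idm: "C \<in> Ob X \<Longrightarrow> A \<in> Ob X \<Longrightarrow> d \<in> Ext X C A \<Longrightarrow> Push X C (Idm X A) d = d"
  using ET1 unfolding ET1_def by simp

lemma Push_comp: "a \<in> Hom X A A' \<Longrightarrow> a' \<in> Hom X A' A'' \<Longrightarrow> C \<in> Ob X \<Longrightarrow> d \<in> Ext X C A \<Longrightarrow>
    Push X C (Cmp X a' a) d = Push X C a' (Push X C a d)"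
  using ET1 unfolding ET1_def by simp

lemma Push_Madd: "a \<in> Hom X A A' \<Longrightarrow> a' \<in> Hom X A A' \<Longrightarrow> C \<in> Ob X \<Longrightarrow> d \<in> Ext X C A \<Longrightarrow>
    Push X C (Madd X a a') d = Eadd X C A' (Push X C a d) (Push X C a' d)"
  using ET1 unfolding ET1_def by simp

lemma Push_Pull: "a \<in> Hom X A A' \<Longrightarrow> c \<in> Hom X C' C \<Longrightarrow> d \<in> Ext X C A \<Longrightarrow>
    Push X C' a (Pull X c A d) = Pull X c A' (Push X C a d)"
  using ET1 unfolding ET1_def by simp

lemma Pull_Ezero:
  assumes c: "c \<in> Hom X C' C" and A: "A \<in> Ob X"
  shows "Pull X c A (Ezero X C A) = Ezero X C' A"
proof -
  have C: "C \<in> Ob X" "C' \<in> Ob X" and z: "Ezero X C A \<in> Ext X C A"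
    using HomD[OF c] Ezero_Ext A by auto
  have "Pull X c A (Ezero X C A) = Pull X c A (Eadd X C A (Ezero X C A) (Ezero X C A))"
    using C A z by (simp add: Eadd_Ezero_left)
  also have "\<dots> = Eadd X C' A (Pull X c A (Ezero X C A)) (Pull X c A (Ezero X C A))"
    by (rule Pull_Eadd[OF c A z z])
  finally show ?thesis using Eadd_idem_imp_Ezero Pull_Ext c A z C by metis
qed

lemma Push_Ezero:
  assumes a: "a \<in> Hom X A A'" and C: "C \<in> Ob X"
  shows "Push X C a (Ezero X C A) = Ezero X C A'"
proof -
  have A: "A \<in> Ob X" "A' \<in> Ob X" and z: "Ezero X C A \<in> Ext X C A"
    using HomD[OF a] Ezero_Ext C by auto
  have "Push X C a (Ezero X C A) = Push X C a (Eadd X C A (Ezero X C A) (Ezero X C A))"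
    using C A z by (simp add: Eadd_Ezero_left)
  also have "\<dots> = Eadd X C A' (Push X C a (Ezero X C A)) (Push X C a (Ezero X C A))"
    by (rule Push_Eadd[OF a C z z])
  finally show ?thesis using Eadd_idem_imp_Ezero Push_Ext a C z A by metis
qed

lemma Push_Eneg_Ezero:
  assumes a: "a \<in> Hom X A Y" and C: "C \<in> Ob X" and d: "d \<in> Ext X C A"
    and zero: "Push X C a d = Ezero X C Y"
  shows "Push X C a (Eneg X C A d) = Ezero X C Y"
proof -
  have A: "A \<in> Ob X" "Y \<in> Ob X" and n: "Eneg X C A d \<in> Ext X C A"
    using HomD[OF a] Eneg_Ext C d by auto
  have "Ezero X C Y = Push X C a (Eadd X C A (Eneg X C A d) d)"
    using Eadd_Eneg_left[OF C A(1) d] Push_Ezero[OF a C] by simp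
  also have "\<dots> = Push X C a (Eneg X C A d)"
    using Push_Eadd[OF a C n d] zero Eadd_Ezero_right[OF C A(2) Push_Ext[OF a C n]] by simp
  finally show ?thesis by simp
qed

lemma Pull_Eneg_Ezero:
  assumes c: "c \<in> Hom X Y C" and A: "A \<in> Ob X" and d: "d \<in> Ext X C A"
    and zero: "Pull X c A d = Ezero X Y A"
  shows "Pull X c A (Eneg X C A d) = Ezero X Y A"
proof -
  have C: "C \<in> Ob X" "Y \<in> Ob X" and n: "Eneg X C A d \<in> Ext X C A"
    using HomD[OF c] Eneg_Ext A d by auto
  have "Ezero X Y A = Pull X c A (Eadd X C A (Eneg X C A d) d)"
    using Eadd_Eneg_left[OF C(1) A d] Pull_Ezero[OF c A] by simp
  also have "\<dots> = Pull X c A (Eneg X C A d)"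
    using Pull_Eadd[OF c A n d] zero Eadd_Ezero_right[OF C(2) A Pull_Ext[OF c A n]] by simp
  finally show ?thesis by simp
qed

lemma Rlz_D: "Rlz X C A d x y \<Longrightarrow>
    C \<in> Ob X \<and> A \<in> Ob X \<and> d \<in> Ext X C A \<and> x \<in> Mor X \<and> y \<in> Mor X \<and>
    Dom X x = A \<and> Cod X y = C \<and> Cod X x = Dom X y"
  using ET2 unfolding ET2_def by (elim conjE) blast

lemma Rlz_Hom: "Rlz X C A d x y \<Longrightarrow> x \<in> Hom X A (Cod X x) \<and> y \<in> Hom X (Cod X x) C"
  using Rlz_D[of C A d x y] by (auto simp: Hom_def)

lemma Rlz_exists: "C \<in> Ob X \<Longrightarrow> A \<in> Ob X \<Longrightarrow> d \<in> Ext X C A \<Longrightarrow> \<exists>x y. Rlz X C A d x y"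
  using ET2 unfolding ET2_def by (elim conjE) blast

lemma Rlz_iff_seq_equiv: "Rlz X C A d x y \<Longrightarrow> Rlz X C A d x' y' \<longleftrightarrow> seq_equiv X x y x' y'"
  using ET2 unfolding ET2_def by (elim conjE) blast

lemma Rlz_morphism:
  "Rlz X C A d x y \<Longrightarrow> Rlz X C' A' d' x' y' \<Longrightarrow> a \<in> Hom X A A' \<Longrightarrow> c \<in> Hom X C C' \<Longrightarrow>
    Push X C a d = Pull X c A' d' \<Longrightarrow>
    \<exists>b\<in>Hom X (Cod X x) (Cod X x'). Cmp X b x = Cmp X x' a \<and> Cmp X y' b = Cmp X c y"
  using ET2[unfolded ET2_def, THEN conjunct2, THEN conjunct2, THEN conjunct2, THEN conjunct1]
  by blast

lemma Rlz_split:
  "biproduct X A C S i1 i2 p1 p2 \<Longrightarrow> A \<in> Ob X \<Longrightarrow> C \<in> Ob X \<Longrightarrow> Rlz X C A (Ezero X C A) i1 p2"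
  using ET2 unfolding ET2_def by simp

lemma Rlz_biproduct:
  assumes "Rlz X C A d x y" "Rlz X C' A' d' x' y'" "biproduct X A A' SA iA iA' pA pA'"
    "biproduct X (Cod X x) (Cod X x') SB iB iB' pB pB'" "biproduct X C C' SC iC iC' pC pC'"
  shows "Rlz X SC SA
    (Eadd X SC SA (Push X SC iA (Pull X pC A d)) (Push X SC iA' (Pull X pC' A' d')))
    (Madd X (Cmp X iB (Cmp X x pA)) (Cmp X iB' (Cmp X x' pA')))
    (Madd X (Cmp X iC (Cmp X y pB)) (Cmp X iC' (Cmp X y' pB')))"
  using ET2[unfolded ET2_def, THEN conjunct2, THEN conjunct2, THEN conjunct2, THEN conjunct2,
    THEN conjunct2, rule_format, OF assms] .

lemma ET3_rule:
  "Rlz X C A d x y \<Longrightarrow> Rlz X C' A' d' x' y' \<Longrightarrow> a \<in> Hom X A A' \<Longrightarrow>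
    b \<in> Hom X (Cod X x) (Cod X x') \<Longrightarrow> Cmp X b x = Cmp X x' a \<Longrightarrow>
    \<exists>c\<in>Hom X C C'. Cmp X c y = Cmp X y' b \<and> Push X C a d = Pull X c A' d'"
  using extriangulated unfolding extriangulated_def ET3_def by blast

lemma ET3op_rule:
  "Rlz X C A d x y \<Longrightarrow> Rlz X C' A' d' x' y' \<Longrightarrow> b \<in> Hom X (Cod X x) (Cod X x') \<Longrightarrow>
    c \<in> Hom X C C' \<Longrightarrow> Cmp X y' b = Cmp X c y \<Longrightarrow>
    \<exists>a\<in>Hom X A A'. Cmp X x' a = Cmp X b x \<and> Push X C a d = Pull X c A' d'"
  using extriangulated unfolding extriangulated_def ET3op_def by blast

section \<open>What inflations and deflations kill\<close>

lemma zero_object: "\<exists>Z\<in>Ob X. Idm X Z = Mzero X Z Z"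
  using is_additive unfolding is_additive_def by blast

lemma Rlz_Idm_Mzero:
  assumes Z: "Z \<in> Ob X" "Idm X Z = Mzero X Z Z" and A: "A \<in> Ob X"
  shows "Rlz X Z A (Ezero X Z A) (Idm X A) (Mzero X A Z)"
proof -
  note through_zero = comp_Mzero_left[OF Mzero_Hom[OF A Z(1)] A]
  have "biproduct X A Z A (Idm X A) (Mzero X Z A) (Idm X A) (Mzero X A Z)"
    unfolding biproduct_def using Z A comp_Idm_left[OF Idm_Hom[OF A]]
    by (simp add: through_zero Idm_Hom Mzero_Hom comp_Mzero_left comp_Mzero_right Madd_Mzero_right)
  then show ?thesis using Rlz_split A Z by blast
qed

lemma Rlz_Mzero_Idm:
  assumes Z: "Z \<in> Ob X" "Idm X Z = Mzero X Z Z" and A: "A \<in> Ob X"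
  shows "Rlz X A Z (Ezero X A Z) (Mzero X Z A) (Idm X A)"
proof -
  note through_zero = comp_Mzero_left[OF Mzero_Hom[OF A Z(1)] A]
  have "biproduct X Z A A (Mzero X Z A) (Idm X A) (Mzero X A Z) (Idm X A)"
    unfolding biproduct_def using Z A comp_Idm_left[OF Idm_Hom[OF A]]
    by (simp add: through_zero Idm_Hom Mzero_Hom comp_Mzero_left comp_Mzero_right Madd_Mzero_left)
  then show ?thesis using Rlz_split A Z by blast
qed

lemma Rlz_weak_kernel:
  assumes r: "Rlz X C A d x y" and t: "t \<in> Hom X Y (Cod X x)" and yt: "Cmp X y t = Mzero X Y C"
  shows "\<exists>u\<in>Hom X Y A. Cmp X x u = t"
proof -
  obtain Z where Z: "Z \<in> Ob X" "Idm X Z = Mzero X Z Z" using zero_object by blast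
  have Y: "Y \<in> Ob X" and C: "C \<in> Ob X" using HomD[OF t] Rlz_D[OF r] by auto
  have "Cmp X (Mzero X Z C) (Mzero X Y Z) = Mzero X Y C"
    using comp_Mzero_left Mzero_Hom Z Y C by blast
  then obtain u where "u \<in> Hom X Y A" "Cmp X x u = Cmp X t (Idm X Y)"
    using ET3op_rule[OF Rlz_Idm_Mzero[OF Z Y] r, of t "Mzero X Z C"] HomD[OF Idm_Hom[OF Y]]
      t yt Mzero_Hom[OF Z(1) C] by auto
  then show ?thesis using comp_Idm_right t by metis
qed

lemma Rlz_weak_cokernel:
  assumes r: "Rlz X C A d x y" and w: "w \<in> Hom X (Cod X x) Y" and wx: "Cmp X w x = Mzero X A Y"
  shows "\<exists>c\<in>Hom X C Y. Cmp X c y = w"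
proof -
  obtain Z where Z: "Z \<in> Ob X" "Idm X Z = Mzero X Z Z" using zero_object by blast
  have Y: "Y \<in> Ob X" and A: "A \<in> Ob X" using HomD[OF w] Rlz_D[OF r] by auto
  have "Cmp X (Mzero X Z Y) (Mzero X A Z) = Mzero X A Y"
    using comp_Mzero_left Mzero_Hom Z Y A by blast
  then obtain c where "c \<in> Hom X C Y" "Cmp X c y = Cmp X (Idm X Y) w"
    using ET3_rule[OF r Rlz_Mzero_Idm[OF Z Y], of "Mzero X A Z" w] HomD[OF Mzero_Hom[OF Z(1) Y]]
      w wx Mzero_Hom[OF A Z(1)] by auto
  then show ?thesis using comp_Idm_left w by metis
qed

lemma Push_inflation_Ezero:
  assumes r: "Rlz X C A d x y"
  shows "Push X C x d = Ezero X C (Cod X x)"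
proof -
  obtain Z where Z: "Z \<in> Ob X" "Idm X Z = Mzero X Z Z" using zero_object by blast
  have x: "x \<in> Hom X A (Cod X x)" and B: "Cod X x \<in> Ob X" using Rlz_Hom[OF r] HomD by auto
  obtain c where "c \<in> Hom X C Z" "Push X C x d = Pull X c (Cod X x) (Ezero X Z (Cod X x))"
    using ET3_rule[OF r Rlz_Idm_Mzero[OF Z B], of x "Idm X (Cod X x)"]
      HomD[OF Idm_Hom[OF B]] x Idm_Hom[OF B] by auto
  then show ?thesis using Pull_Ezero B by simp
qed

lemma Pull_deflation_Ezero:
  assumes r: "Rlz X C A d x y"
  shows "Pull X y A d = Ezero X (Cod X x) A"
proof -
  obtain Z where Z: "Z \<in> Ob X" "Idm X Z = Mzero X Z Z" using zero_object by blast
  have y: "y \<in> Hom X (Cod X x) C" and B: "Cod X x \<in> Ob X" and A: "A \<in> Ob X"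
    using Rlz_Hom[OF r] HomD Rlz_D[OF r] by auto
  obtain a where "a \<in> Hom X Z A" "Push X (Cod X x) a (Ezero X (Cod X x) Z) = Pull X y A d"
    using ET3op_rule[OF Rlz_Mzero_Idm[OF Z B] r, of "Idm X (Cod X x)" y]
      HomD[OF Mzero_Hom[OF Z(1) B]] y Idm_Hom[OF B] by auto
  then show ?thesis using Push_Ezero B by metis
qed

lemma factors_through_inflation_if_Push_Ezero:
  assumes r: "Rlz X C A d x y" and a: "a \<in> Hom X A Y" and push: "Push X C a d = Ezero X C Y"
  shows "\<exists>h\<in>Hom X (Cod X x) Y. Cmp X h x = a"
proof -
  obtain Z where Z: "Z \<in> Ob X" "Idm X Z = Mzero X Z Z" using zero_object by blast
  have Y: "Y \<in> Ob X" and C: "C \<in> Ob X" using HomD[OF a] Rlz_D[OF r] by auto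
  have "Pull X (Mzero X C Z) Y (Ezero X Z Y) = Ezero X C Y"
    using Pull_Ezero Mzero_Hom C Z Y by blast
  then obtain h where "h \<in> Hom X (Cod X x) Y" "Cmp X h x = Cmp X (Idm X Y) a"
    using Rlz_morphism[OF r Rlz_Idm_Mzero[OF Z Y] a Mzero_Hom[OF C Z(1)]]
      HomD[OF Idm_Hom[OF Y]] push by auto
  then show ?thesis using comp_Idm_left a by metis
qed

lemma factors_through_deflation_if_Pull_Ezero:
  assumes r: "Rlz X C A d x y" and c: "c \<in> Hom X Y C" and pull: "Pull X c A d = Ezero X Y A"
  shows "\<exists>h\<in>Hom X Y (Cod X x). Cmp X y h = c"
proof -
  obtain Z where Z: "Z \<in> Ob X" "Idm X Z = Mzero X Z Z" using zero_object by blast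
  have Y: "Y \<in> Ob X" and A: "A \<in> Ob X" using HomD[OF c] Rlz_D[OF r] by auto
  have "Push X Y (Mzero X Z A) (Ezero X Y Z) = Ezero X Y A"
    using Push_Ezero Mzero_Hom A Z Y by blast
  then obtain h where "h \<in> Hom X Y (Cod X x)" "Cmp X y h = Cmp X c (Idm X Y)"
    using Rlz_morphism[OF Rlz_Mzero_Idm[OF Z Y] r Mzero_Hom[OF Z(1) A] c]
      HomD[OF Mzero_Hom[OF Z(1) Y]] pull by auto
  then show ?thesis using comp_Idm_right c by metis
qed

lemma D_monic_inflation_iff:
  assumes r: "Rlz X C A d x y"
  shows "D_monic X D x \<longleftrightarrow> (\<forall>Y\<in>D. \<forall>a\<in>Hom X A Y. Push X C a d = Ezero X C Y)"
proof
  assume monic: "D_monic X D x"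
  have x: "x \<in> Hom X A (Cod X x)" and C: "C \<in> Ob X" and d: "d \<in> Ext X C A"
    using Rlz_D[OF r] Rlz_Hom[OF r] by auto
  show "\<forall>Y\<in>D. \<forall>a\<in>Hom X A Y. Push X C a d = Ezero X C Y"
  proof (intro ballI)
    fix Y a assume "Y \<in> D" and a: "a \<in> Hom X A Y"
    then obtain h where h: "h \<in> Hom X (Cod X x) Y" "Cmp X h x = a"
      using monic HomD[OF x] unfolding D_monic_def by metis
    have "Push X C a d = Push X C h (Push X C x d)" using Push_comp[OF x h(1) C d] h(2) by simp
    also have "\<dots> = Ezero X C Y" using Push_inflation_Ezero[OF r] Push_Ezero[OF h(1) C] by simp
    finally show "Push X C a d = Ezero X C Y" .
  qed
next
  assume push: "\<forall>Y\<in>D. \<forall>a\<in>Hom X A Y. Push X C a d = Ezero X C Y"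
  have "Dom X x = A" using Rlz_D[OF r] by blast
  then show "D_monic X D x"
    unfolding D_monic_def using push factors_through_inflation_if_Push_Ezero[OF r] by auto
qed

lemma D_epic_deflation_iff:
  assumes r: "Rlz X C A d x y"
  shows "D_epic X D y \<longleftrightarrow> (\<forall>Y\<in>D. \<forall>c\<in>Hom X Y C. Pull X c A d = Ezero X Y A)"
proof
  assume epic: "D_epic X D y"
  have y: "y \<in> Hom X (Cod X x) C" and A: "A \<in> Ob X" and d: "d \<in> Ext X C A"
    using Rlz_D[OF r] Rlz_Hom[OF r] by auto
  show "\<forall>Y\<in>D. \<forall>c\<in>Hom X Y C. Pull X c A d = Ezero X Y A"
  proof (intro ballI)
    fix Y c assume "Y \<in> D" and c: "c \<in> Hom X Y C"
    then obtain h where h: "h \<in> Hom X Y (Cod X x)" "Cmp X y h = c"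
      using epic HomD[OF y] unfolding D_epic_def by metis
    have "Pull X c A d = Pull X h A (Pull X y A d)" using Pull_comp[OF y h(1) A d] h(2) by simp
    also have "\<dots> = Ezero X Y A" using Pull_deflation_Ezero[OF r] Pull_Ezero[OF h(1) A] by simp
    finally show "Pull X c A d = Ezero X Y A" .
  qed
next
  assume pull: "\<forall>Y\<in>D. \<forall>c\<in>Hom X Y C. Pull X c A d = Ezero X Y A"
  have "Cod X y = C" "Dom X y = Cod X x" using Rlz_D[OF r] by auto
  then show "D_epic X D y"
    unfolding D_epic_def using pull factors_through_deflation_if_Pull_Ezero[OF r] by auto
qed

lemma IExt_iff:
  assumes "C \<in> Ob X" "A \<in> Ob X"
  shows "d \<in> IExt X D C A \<longleftrightarrow>
    d \<in> Ext X C A \<and> (\<forall>Y\<in>D. \<forall>a\<in>Hom X A Y. Push X C a d = Ezero X C Y)"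
proof
  assume "d \<in> IExt X D C A"
  then obtain x y where "d \<in> Ext X C A" "Rlz X C A d x y" "D_monic X D x"
    unfolding IExt_def by blast
  then show "d \<in> Ext X C A \<and> (\<forall>Y\<in>D. \<forall>a\<in>Hom X A Y. Push X C a d = Ezero X C Y)"
    using D_monic_inflation_iff by blast
next
  assume push: "d \<in> Ext X C A \<and> (\<forall>Y\<in>D. \<forall>a\<in>Hom X A Y. Push X C a d = Ezero X C Y)"
  then obtain x y where r: "Rlz X C A d x y" using Rlz_exists assms by blast
  then show "d \<in> IExt X D C A" using push D_monic_inflation_iff[OF r] unfolding IExt_def by blast
qed

lemma PExt_iff:
  assumes "C \<in> Ob X" "A \<in> Ob X"
  shows "d \<in> PExt X D C A \<longleftrightarrow>
    d \<in> Ext X C A \<and> (\<forall>Y\<in>D. \<forall>c\<in>Hom X Y C. Pull X c A d = Ezero X Y A)"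
proof
  assume "d \<in> PExt X D C A"
  then obtain x y where "d \<in> Ext X C A" "Rlz X C A d x y" "D_epic X D y"
    unfolding PExt_def by blast
  then show "d \<in> Ext X C A \<and> (\<forall>Y\<in>D. \<forall>c\<in>Hom X Y C. Pull X c A d = Ezero X Y A)"
    using D_epic_deflation_iff by blast
next
  assume pull: "d \<in> Ext X C A \<and> (\<forall>Y\<in>D. \<forall>c\<in>Hom X Y C. Pull X c A d = Ezero X Y A)"
  then obtain x y where r: "Rlz X C A d x y" using Rlz_exists assms by blast
  then show "d \<in> PExt X D C A" using pull D_epic_deflation_iff[OF r] unfolding PExt_def by blast
qed

lemma IExt_D_monic:
  assumes d: "d \<in> IExt X D C A" and r: "Rlz X C A d x y"
  shows "D_monic X D x"
proof -
  have "C \<in> Ob X" "A \<in> Ob X" using Rlz_D[OF r] by auto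
  then have "\<forall>Y\<in>D. \<forall>a\<in>Hom X A Y. Push X C a d = Ezero X C Y" using d IExt_iff by blast
  then show ?thesis using D_monic_inflation_iff[OF r] by blast
qed

lemma PExt_D_epic:
  assumes d: "d \<in> PExt X D C A" and r: "Rlz X C A d x y"
  shows "D_epic X D y"
proof -
  have "C \<in> Ob X" "A \<in> Ob X" using Rlz_D[OF r] by auto
  then have "\<forall>Y\<in>D. \<forall>c\<in>Hom X Y C. Pull X c A d = Ezero X Y A" using d PExt_iff by blast
  then show ?thesis using D_epic_deflation_iff[OF r] by blast
qed

lemma IExt_obj:
  assumes "d \<in> IExt X D C A" shows "C \<in> Ob X \<and> A \<in> Ob X \<and> d \<in> Ext X C A"
proof -
  obtain x y where "Rlz X C A d x y" using assms unfolding IExt_def by blast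
  then show ?thesis using Rlz_D by blast
qed

lemma PExt_obj:
  assumes "d \<in> PExt X D C A" shows "C \<in> Ob X \<and> A \<in> Ob X \<and> d \<in> Ext X C A"
proof -
  obtain x y where "Rlz X C A d x y" using assms unfolding PExt_def by blast
  then show ?thesis using Rlz_D by blast
qed

lemma ET4_rule:
  "Rlz X C A d f f' \<Longrightarrow> Rlz X C' B d' g g' \<Longrightarrow> Cod X f = B \<Longrightarrow>
    \<exists>E\<in>Ob X. \<exists>h'\<in>Hom X (Cod X g) E. \<exists>c\<in>Hom X C E. \<exists>e\<in>Hom X E C'. \<exists>d''\<in>Ext X E A.
      Rlz X E A d'' (Cmp X g f) h' \<and> Cmp X h' g = Cmp X c f' \<and> Cmp X e h' = g' \<and>
      Rlz X C' C (Push X C' f' d') c e \<and> Pull X c A d'' = d \<and> Push X E f d'' = Pull X e B d'"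
  using extriangulated unfolding extriangulated_def ET4_def by blast

lemma ET4op_rule:
  "Rlz X A C d f' f \<Longrightarrow> Rlz X B C' d' g' g \<Longrightarrow> Dom X f = B \<Longrightarrow>
    \<exists>E\<in>Ob X. \<exists>h'\<in>Hom X E (Dom X g). \<exists>c\<in>Hom X E C. \<exists>e\<in>Hom X C' E. \<exists>d''\<in>Ext X A E.
      Rlz X A E d'' h' (Cmp X f g) \<and> Cmp X g h' = Cmp X f' c \<and> Cmp X h' e = g' \<and>
      Rlz X C C' (Pull X f' C' d') e c \<and> Push X A c d'' = d \<and> Pull X f E d'' = Push X B e d'"
  using extriangulated unfolding extriangulated_def ET4op_def by blast

lemma ET1_restr:
  assumes sub: "subfunctor X F"
  shows "ET1 (restr X F)"
  unfolding ET1_def restr_simps restr_Hom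
  by (intro conjI ballI allI impI;
      (rule subfunctor_Ezero[OF sub] subfunctor_Eadd[OF sub] subfunctor_Eneg[OF sub]
        subfunctor_Pull[OF sub] subfunctor_Push[OF sub]; assumption)?;
      (rule Eadd_assoc Eadd_commute Eadd_Ezero_left Eadd_Eneg_left Pull_Eadd Pull_Idm Pull_comp
        Pull_Madd Push_Eadd Push_Idm Push_comp Push_Madd Push_Pull;
        (assumption | erule subfunctor_Ext[OF sub, THEN subsetD])))

lemma ET2_restr:
  assumes sub: "subfunctor X F"
  shows "ET2 (restr X F)"
  unfolding ET2_def restr_simps restr_Hom restr_biproduct restr_seq_equiv
  apply (intro conjI)
  subgoal using Rlz_D by blast
  subgoal using Rlz_exists subfunctor_Ext[OF sub] by blast
  subgoal using Rlz_iff_seq_equiv by blast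
  subgoal using Rlz_morphism by blast
  subgoal using Rlz_split subfunctor_Ezero[OF sub] by blast
  subgoal
    by (intro allI impI conjI; elim conjE)
      (auto intro!: subfunctor_Eadd[OF sub] subfunctor_Push[OF sub] subfunctor_Pull[OF sub]
        Rlz_biproduct simp: biproduct_def)
  done

lemma ET3_restr: "ET3 (restr X F)" and ET3op_restr: "ET3op (restr X F)"
  unfolding ET3_def ET3op_def restr_simps restr_Hom
  by (intro allI impI, elim conjE, (rule ET3_rule ET3op_rule; assumption))+

lemma ET4_restr:
  assumes sub: "subfunctor X F" and closed: "ET4_closed X F"
  shows "ET4 (restr X F)"
  unfolding ET4_def restr_simps restr_Hom
proof (intro allI impI)
  fix A B C C' d d' f f' g g'
  assume "d \<in> F C A \<and> Rlz X C A d f f'" and "d' \<in> F C' B \<and> Rlz X C' B d' g g'"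
    and B: "Cod X f = B"
  then have d: "d \<in> F C A" "Rlz X C A d f f'" and d': "d' \<in> F C' B" "Rlz X C' B d' g g'" by auto
  obtain E h' c e d'' where oct: "E \<in> Ob X" "h' \<in> Hom X (Cod X g) E" "c \<in> Hom X C E"
    "e \<in> Hom X E C'" "d'' \<in> Ext X E A" "Rlz X E A d'' (Cmp X g f) h'"
    "Cmp X h' g = Cmp X c f'" "Cmp X e h' = g'" "Rlz X C' C (Push X C' f' d') c e"
    "Pull X c A d'' = d" "Push X E f d'' = Pull X e B d'"
    using ET4_rule[OF d(2) d'(2) B] by blast
  have "d'' \<in> F E A" using ET4_closedD[OF closed d d' B oct(2-4,6-9)] .
  moreover have "Push X C' f' d' \<in> F C' C"
    using subfunctor_Push[OF sub _ d'(1)] Rlz_Hom[OF d(2)] B by simp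
  ultimately show "\<exists>E\<in>Ob X. \<exists>h'\<in>Hom X (Cod X g) E. \<exists>c\<in>Hom X C E. \<exists>e\<in>Hom X E C'.
    \<exists>d''\<in>F E A. (d'' \<in> F E A \<and> Rlz X E A d'' (Cmp X g f) h') \<and>
      Cmp X h' g = Cmp X c f' \<and> Cmp X e h' = g' \<and>
      (Push X C' f' d' \<in> F C' C \<and> Rlz X C' C (Push X C' f' d') c e) \<and>
      Pull X c A d'' = d \<and> Push X E f d'' = Pull X e B d'"
    using oct by blast
qed

lemma ET4op_restr:
  assumes sub: "subfunctor X F" and closed: "ET4op_closed X F"
  shows "ET4op (restr X F)"
  unfolding ET4op_def restr_simps restr_Hom
proof (intro allI impI)
  fix A B C C' d d' f f' g g'
  assume "d \<in> F A C \<and> Rlz X A C d f' f" and "d' \<in> F B C' \<and> Rlz X B C' d' g' g"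
    and B: "Dom X f = B"
  then have d: "d \<in> F A C" "Rlz X A C d f' f" and d': "d' \<in> F B C'" "Rlz X B C' d' g' g" by auto
  obtain E h' c e d'' where oct: "E \<in> Ob X" "h' \<in> Hom X E (Dom X g)" "c \<in> Hom X E C"
    "e \<in> Hom X C' E" "d'' \<in> Ext X A E" "Rlz X A E d'' h' (Cmp X f g)"
    "Cmp X g h' = Cmp X f' c" "Cmp X h' e = g'" "Rlz X C C' (Pull X f' C' d') e c"
    "Push X A c d'' = d" "Pull X f E d'' = Push X B e d'"
    using ET4op_rule[OF d(2) d'(2) B] by blast
  have "d'' \<in> F A E" using ET4op_closedD[OF closed d d' B oct(2-4,6-9)] .
  moreover have "Pull X f' C' d' \<in> F C C'"
    using subfunctor_Pull[OF sub _ d'(1)] Rlz_Hom[OF d(2)] Rlz_D[OF d(2)] B by simp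
  ultimately show "\<exists>E\<in>Ob X. \<exists>h'\<in>Hom X E (Dom X g). \<exists>c\<in>Hom X E C. \<exists>e\<in>Hom X C' E.
    \<exists>d''\<in>F A E. (d'' \<in> F A E \<and> Rlz X A E d'' h' (Cmp X f g)) \<and>
      Cmp X g h' = Cmp X f' c \<and> Cmp X h' e = g' \<and>
      (Pull X f' C' d' \<in> F C C' \<and> Rlz X C C' (Pull X f' C' d') e c) \<and>
      Push X A c d'' = d \<and> Pull X f E d'' = Push X B e d'"
    using oct by blast
qed

lemma external_triangulation_if_closed:
  assumes "subfunctor X F" and "ET4_closed X F" and "ET4op_closed X F"
  shows "external_triangulation X F"
  unfolding external_triangulation_def extriangulated_def
  using is_additive ET1_restr ET2_restr ET3_restr ET3op_restr ET4_restr ET4op_restr assms by simp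

lemma subfunctor_IExt: "subfunctor X (IExt X D)"
  unfolding subfunctor_def
proof (intro conjI allI ballI impI subsetI)
  fix C A d assume "d \<in> IExt X D C A"
  then show "d \<in> Ext X C A" using IExt_obj by blast
next
  fix C A assume "C \<in> Ob X" "A \<in> Ob X"
  then show "Ezero X C A \<in> IExt X D C A"
    using IExt_iff Ezero_Ext Push_Ezero by simp
next
  fix C A d d' assume d: "d \<in> IExt X D C A" and d': "d' \<in> IExt X D C A"
  have C: "C \<in> Ob X" and A: "A \<in> Ob X" and dd: "d \<in> Ext X C A" "d' \<in> Ext X C A"
    using IExt_obj d d' by auto
  have "Push X C a (Eadd X C A d d') = Ezero X C Y" if "Y \<in> D" "a \<in> Hom X A Y" for Y a
    using that d d' IExt_iff[OF C A] Push_Eadd[OF that(2) C dd]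
      Eadd_Ezero_left[OF C _ Ezero_Ext[OF C]] HomD by simp
  then show "Eadd X C A d d' \<in> IExt X D C A" using IExt_iff[OF C A] Eadd_Ext[OF C A dd] by blast
next
  fix C A d assume d: "d \<in> IExt X D C A"
  have C: "C \<in> Ob X" and A: "A \<in> Ob X" and dd: "d \<in> Ext X C A" using IExt_obj d by auto
  have "Push X C a (Eneg X C A d) = Ezero X C Y" if "Y \<in> D" "a \<in> Hom X A Y" for Y a
    using that d IExt_iff[OF C A] Push_Eneg_Ezero[OF that(2) C dd] by simp
  then show "Eneg X C A d \<in> IExt X D C A" using IExt_iff[OF C A] Eneg_Ext[OF C A dd] by blast
next
  fix C C' A c d assume c: "c \<in> Hom X C' C" and d: "d \<in> IExt X D C A"
  have C: "C \<in> Ob X" "C' \<in> Ob X" and A: "A \<in> Ob X" and dd: "d \<in> Ext X C A"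
    using IExt_obj d HomD c by auto
  have "Push X C' a (Pull X c A d) = Ezero X C' Y" if "Y \<in> D" "a \<in> Hom X A Y" for Y a
    using that d IExt_iff[OF C(1) A] Push_Pull[OF that(2) c dd] Pull_Ezero[OF c] HomD by simp
  then show "Pull X c A d \<in> IExt X D C' A" using IExt_iff[OF C(2) A] Pull_Ext[OF c A dd] by blast
next
  fix C A A' a d assume a: "a \<in> Hom X A A'" and d: "d \<in> IExt X D C A"
  have C: "C \<in> Ob X" and A: "A \<in> Ob X" "A' \<in> Ob X" and dd: "d \<in> Ext X C A"
    using IExt_obj d HomD a by auto
  have "Push X C b (Push X C a d) = Ezero X C Y" if "Y \<in> D" "b \<in> Hom X A' Y" for Y b
    using that d IExt_iff[OF C A(1)] Push_comp[OF a that(2) C dd] comp_Hom[OF a that(2)] by simp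
  then show "Push X C a d \<in> IExt X D C A'" using IExt_iff[OF C A(2)] Push_Ext[OF a C dd] by blast
qed

lemma subfunctor_PExt: "subfunctor X (PExt X D)"
  unfolding subfunctor_def
proof (intro conjI allI ballI impI subsetI)
  fix C A d assume "d \<in> PExt X D C A"
  then show "d \<in> Ext X C A" using PExt_obj by blast
next
  fix C A assume "C \<in> Ob X" "A \<in> Ob X"
  then show "Ezero X C A \<in> PExt X D C A"
    using PExt_iff Ezero_Ext Pull_Ezero by simp
next
  fix C A d d' assume d: "d \<in> PExt X D C A" and d': "d' \<in> PExt X D C A"
  have C: "C \<in> Ob X" and A: "A \<in> Ob X" and dd: "d \<in> Ext X C A" "d' \<in> Ext X C A"
    using PExt_obj d d' by auto
  have "Pull X c A (Eadd X C A d d') = Ezero X Y A" if "Y \<in> D" "c \<in> Hom X Y C" for Y c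
    using that d d' PExt_iff[OF C A] Pull_Eadd[OF that(2) A dd]
      Eadd_Ezero_left[OF _ A Ezero_Ext[OF _ A]] HomD by simp
  then show "Eadd X C A d d' \<in> PExt X D C A" using PExt_iff[OF C A] Eadd_Ext[OF C A dd] by blast
next
  fix C A d assume d: "d \<in> PExt X D C A"
  have C: "C \<in> Ob X" and A: "A \<in> Ob X" and dd: "d \<in> Ext X C A" using PExt_obj d by auto
  have "Pull X c A (Eneg X C A d) = Ezero X Y A" if "Y \<in> D" "c \<in> Hom X Y C" for Y c
    using that d PExt_iff[OF C A] Pull_Eneg_Ezero[OF that(2) A dd] by simp
  then show "Eneg X C A d \<in> PExt X D C A" using PExt_iff[OF C A] Eneg_Ext[OF C A dd] by blast
next
  fix C C' A c d assume c: "c \<in> Hom X C' C" and d: "d \<in> PExt X D C A"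
  have C: "C \<in> Ob X" "C' \<in> Ob X" and A: "A \<in> Ob X" and dd: "d \<in> Ext X C A"
    using PExt_obj d HomD c by auto
  have "Pull X b A (Pull X c A d) = Ezero X Y A" if "Y \<in> D" "b \<in> Hom X Y C'" for Y b
    using that d PExt_iff[OF C(1) A] Pull_comp[OF c that(2) A dd] comp_Hom[OF that(2) c] by simp
  then show "Pull X c A d \<in> PExt X D C' A" using PExt_iff[OF C(2) A] Pull_Ext[OF c A dd] by blast
next
  fix C A A' a d assume a: "a \<in> Hom X A A'" and d: "d \<in> PExt X D C A"
  have C: "C \<in> Ob X" and A: "A \<in> Ob X" "A' \<in> Ob X" and dd: "d \<in> Ext X C A"
    using PExt_obj d HomD a by auto
  have "Pull X c A' (Push X C a d) = Ezero X Y A'" if "Y \<in> D" "c \<in> Hom X Y C" for Y c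
    using that d PExt_iff[OF C A(1)] Push_Pull[OF a that(2) dd] Push_Ezero[OF a] HomD by simp
  then show "Push X C a d \<in> PExt X D C A'" using PExt_iff[OF C A(2)] Push_Ext[OF a C dd] by blast
qed

lemma D_monic_comp:
  assumes f: "f \<in> Hom X A B" and g: "g \<in> Hom X B C" and "D_monic X D f" "D_monic X D g"
  shows "D_monic X D (Cmp X g f)"
  unfolding D_monic_def
proof (intro ballI)
  fix Y t assume Y: "Y \<in> D" and "t \<in> Hom X (Dom X (Cmp X g f)) Y"
  then have t: "t \<in> Hom X A Y" using HomD comp_Hom[OF f g] by metis
  obtain s where s: "s \<in> Hom X B Y" "Cmp X s f = t"
    using assms(3) Y t HomD[OF f] unfolding D_monic_def by metis
  obtain u where u: "u \<in> Hom X C Y" "Cmp X u g = s"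
    using assms(4) Y s(1) HomD[OF g] unfolding D_monic_def by metis
  have "Cmp X u (Cmp X g f) = t" using comp_assoc[OF f g u(1)] s u by simp
  then show "\<exists>h\<in>Hom X (Cod X (Cmp X g f)) Y. Cmp X h (Cmp X g f) = t"
    using u HomD comp_Hom[OF f g] by metis
qed

lemma D_epic_comp:
  assumes f: "f \<in> Hom X A B" and g: "g \<in> Hom X B C" and "D_epic X D f" "D_epic X D g"
  shows "D_epic X D (Cmp X g f)"
  unfolding D_epic_def
proof (intro ballI)
  fix Y t assume Y: "Y \<in> D" and "t \<in> Hom X Y (Cod X (Cmp X g f))"
  then have t: "t \<in> Hom X Y C" using HomD comp_Hom[OF f g] by metis
  obtain s where s: "s \<in> Hom X Y B" "Cmp X g s = t"
    using assms(4) Y t HomD[OF g] unfolding D_epic_def by metis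
  obtain u where u: "u \<in> Hom X Y A" "Cmp X f u = s"
    using assms(3) Y s(1) HomD[OF f] unfolding D_epic_def by metis
  have "Cmp X (Cmp X g f) u = t" using comp_assoc[OF u(1) f g] s u by simp
  then show "\<exists>h\<in>Hom X Y (Dom X (Cmp X g f)). Cmp X (Cmp X g f) h = t"
    using u HomD comp_Hom[OF f g] by metis
qed

text \<open>In the octahedron of (ET4), with triangles \<open>B -g\<rightarrow> G -g'\<rightarrow> C'\<close> and
  \<open>C -c\<rightarrow> E -e\<rightarrow> C'\<close> and the square \<open>h' g = c f'\<close>: a map \<open>t : Y \<rightarrow> E\<close> is corrected by
  a lift of \<open>e t\<close> through \<open>g'\<close>; the difference is killed by \<open>e\<close>, so it factors through
  \<open>c\<close> and then, via \<open>f'\<close>, through \<open>h' g\<close>.\<close>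
lemma D_epic_octahedron:
  assumes f': "f' \<in> Hom X B C" and g: "g \<in> Hom X B G" and g': "g' \<in> Hom X G C'"
    and h': "h' \<in> Hom X G E" and c: "c \<in> Hom X C E" and e: "e \<in> Hom X E C'"
    and r: "Rlz X C' C \<delta> c e" and square: "Cmp X h' g = Cmp X c f'" and tri: "Cmp X e h' = g'"
    and epic_f': "D_epic X D f'" and epic_g': "D_epic X D g'"
  shows "D_epic X D h'"
  unfolding D_epic_def
proof (intro ballI)
  fix Y t assume Y: "Y \<in> D" and "t \<in> Hom X Y (Cod X h')"
  then have t: "t \<in> Hom X Y E" using HomD[OF h'] by simp
  obtain s where s: "s \<in> Hom X Y G" "Cmp X g' s = Cmp X e t"
    using epic_g' Y comp_Hom[OF t e] HomD[OF g'] unfolding D_epic_def by metis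
  define m where "m = Cmp X h' s"
  have m: "m \<in> Hom X Y E" unfolding m_def using comp_Hom[OF s(1) h'] .
  have "Cmp X e m = Cmp X e t" unfolding m_def using comp_assoc[OF s(1) h' e] tri s(2) by simp
  then have "Cmp X e (Madd X (Mneg X m) t) = Mzero X Y C'"
    using comp_Madd_Mneg_eq_Mzero_left[OF e m t] by simp
  then obtain u where u: "u \<in> Hom X Y C" "Cmp X c u = Madd X (Mneg X m) t"
    using Rlz_weak_kernel[OF r, of "Madd X (Mneg X m) t" Y] Madd_Hom[OF Mneg_Hom[OF m] t] HomD[OF c]
    by auto
  obtain v where v: "v \<in> Hom X Y B" "Cmp X f' v = u"
    using epic_f' Y u(1) HomD[OF f'] unfolding D_epic_def by metis
  have gv: "Cmp X g v \<in> Hom X Y G" using comp_Hom[OF v(1) g] .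
  have "Madd X (Mneg X m) t = Cmp X h' (Cmp X g v)"
    using u(2) v(2) comp_assoc[OF v(1) f' c] comp_assoc[OF v(1) g h'] square by simp
  then have "Cmp X h' (Madd X s (Cmp X g v)) = t"
    using comp_distrib_left[OF s(1) gv h'] Madd_Mneg_cancel_left[OF m t] m_def by simp
  moreover have "Madd X s (Cmp X g v) \<in> Hom X Y (Dom X h')"
    using Madd_Hom[OF s(1) gv] HomD[OF h'] by simp
  ultimately show "\<exists>k\<in>Hom X Y (Dom X h'). Cmp X h' k = t" by blast
qed

lemma D_monic_octahedron:
  assumes f': "f' \<in> Hom X C B" and g: "g \<in> Hom X G B" and g': "g' \<in> Hom X C' G"
    and h': "h' \<in> Hom X E G" and c: "c \<in> Hom X E C" and e: "e \<in> Hom X C' E"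
    and r: "Rlz X C C' \<delta> e c" and square: "Cmp X g h' = Cmp X f' c" and tri: "Cmp X h' e = g'"
    and monic_f': "D_monic X D f'" and monic_g': "D_monic X D g'"
  shows "D_monic X D h'"
  unfolding D_monic_def
proof (intro ballI)
  fix Y t assume Y: "Y \<in> D" and "t \<in> Hom X (Dom X h') Y"
  then have t: "t \<in> Hom X E Y" using HomD[OF h'] by simp
  obtain s where s: "s \<in> Hom X G Y" "Cmp X s g' = Cmp X t e"
    using monic_g' Y comp_Hom[OF e t] HomD[OF g'] unfolding D_monic_def by metis
  define m where "m = Cmp X s h'"
  have m: "m \<in> Hom X E Y" unfolding m_def using comp_Hom[OF h' s(1)] .
  have "Cmp X m e = Cmp X t e" unfolding m_def using comp_assoc[OF e h' s(1)] tri s(2) by simp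
  then have "Cmp X (Madd X (Mneg X m) t) e = Mzero X C' Y"
    using comp_Madd_Mneg_eq_Mzero_right[OF e m t] by simp
  then obtain u where u: "u \<in> Hom X C Y" "Cmp X u c = Madd X (Mneg X m) t"
    using Rlz_weak_cokernel[OF r, of "Madd X (Mneg X m) t" Y] Madd_Hom[OF Mneg_Hom[OF m] t]
      HomD[OF e] by auto
  obtain v where v: "v \<in> Hom X B Y" "Cmp X v f' = u"
    using monic_f' Y u(1) HomD[OF f'] unfolding D_monic_def by metis
  have vg: "Cmp X v g \<in> Hom X G Y" using comp_Hom[OF g v(1)] .
  have "Madd X (Mneg X m) t = Cmp X (Cmp X v g) h'"
    using u(2) v(2) comp_assoc[OF c f' v(1)] comp_assoc[OF h' g v(1)] square by simp
  then have "Cmp X (Madd X s (Cmp X v g)) h' = t"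
    using comp_distrib_right[OF h' s(1) vg] Madd_Mneg_cancel_left[OF m t] m_def by simp
  moreover have "Madd X s (Cmp X v g) \<in> Hom X (Cod X h') Y"
    using Madd_Hom[OF s(1) vg] HomD[OF h'] by simp
  ultimately show "\<exists>k\<in>Hom X (Cod X h') Y. Cmp X k h' = t" by blast
qed

lemma ET4_closed_IExt: "ET4_closed X (IExt X D)"
  unfolding ET4_closed_def
proof (intro allI impI)
  fix A B C C' E d d' d'' f f' g g' h' c e
  assume "d \<in> IExt X D C A" "Rlz X C A d f f'" "d' \<in> IExt X D C' B" "Rlz X C' B d' g g'"
    "Cod X f = B" and r: "Rlz X E A d'' (Cmp X g f) h'"
  then have "D_monic X D (Cmp X g f)"
    using D_monic_comp IExt_D_monic Rlz_Hom by metis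
  then show "d'' \<in> IExt X D E A" unfolding IExt_def using r Rlz_D by blast
qed

lemma ET4op_closed_PExt: "ET4op_closed X (PExt X D)"
  unfolding ET4op_closed_def
proof (intro allI impI)
  fix A B C C' E d d' d'' f f' g g' h' c e
  assume "d \<in> PExt X D A C" "Rlz X A C d f' f" "d' \<in> PExt X D B C'" "Rlz X B C' d' g' g"
    "Dom X f = B" and r: "Rlz X A E d'' h' (Cmp X f g)"
  then have "D_epic X D (Cmp X f g)"
    using D_epic_comp PExt_D_epic Rlz_Hom Rlz_D by metis
  then show "d'' \<in> PExt X D A E" unfolding PExt_def using r Rlz_D by blast
qed

lemma ET4_closed_PExt: "ET4_closed X (PExt X D)"
  unfolding ET4_closed_def
proof (intro allI impI)
  fix A B C C' E d d' d'' f f' g g' h' c e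
  assume d: "d \<in> PExt X D C A" and r1: "Rlz X C A d f f'"
    and d': "d' \<in> PExt X D C' B" and r2: "Rlz X C' B d' g g'" and B: "Cod X f = B"
    and h': "h' \<in> Hom X (Cod X g) E" and c: "c \<in> Hom X C E" and e: "e \<in> Hom X E C'"
    and r: "Rlz X E A d'' (Cmp X g f) h'" and square: "Cmp X h' g = Cmp X c f'"
    and tri: "Cmp X e h' = g'" and r3: "Rlz X C' C (Push X C' f' d') c e"
  have f': "f' \<in> Hom X B C" using Rlz_Hom[OF r1] B by simp
  have g: "g \<in> Hom X B (Cod X g)" "g' \<in> Hom X (Cod X g) C'" using Rlz_Hom[OF r2] by auto
  have "D_epic X D h'"
    using D_epic_octahedron[OF f' g h' c e r3 square tri PExt_D_epic[OF d r1] PExt_D_epic[OF d' r2]] .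
  then show "d'' \<in> PExt X D E A" unfolding PExt_def using r Rlz_D by blast
qed

lemma ET4op_closed_IExt: "ET4op_closed X (IExt X D)"
  unfolding ET4op_closed_def
proof (intro allI impI)
  fix A B C C' E d d' d'' f f' g g' h' c e
  assume d: "d \<in> IExt X D A C" and r1: "Rlz X A C d f' f"
    and d': "d' \<in> IExt X D B C'" and r2: "Rlz X B C' d' g' g" and B: "Dom X f = B"
    and h': "h' \<in> Hom X E (Dom X g)" and c: "c \<in> Hom X E C" and e: "e \<in> Hom X C' E"
    and r: "Rlz X A E d'' h' (Cmp X f g)" and square: "Cmp X g h' = Cmp X f' c"
    and tri: "Cmp X h' e = g'" and r3: "Rlz X C C' (Pull X f' C' d') e c"
  have f': "f' \<in> Hom X C B" using Rlz_Hom[OF r1] Rlz_D[OF r1] B by simp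
  have g: "g \<in> Hom X (Dom X g) B" "g' \<in> Hom X C' (Dom X g)"
    using Rlz_Hom[OF r2] Rlz_D[OF r2] by auto
  have "D_monic X D h'"
    using D_monic_octahedron[OF f' g h' c e r3 square tri IExt_D_monic[OF d r1] IExt_D_monic[OF d' r2]] .
  then show "d'' \<in> IExt X D A E" unfolding IExt_def using r Rlz_D by blast
qed

lemma external_triangulation_IExt: "external_triangulation X (IExt X D)"
  using external_triangulation_if_closed subfunctor_IExt ET4_closed_IExt ET4op_closed_IExt .

lemma external_triangulation_PExt: "external_triangulation X (PExt X D)"
  using external_triangulation_if_closed subfunctor_PExt ET4_closed_PExt ET4op_closed_PExt .

lemma external_triangulation_DExt: "external_triangulation X (DExt X D)"
  unfolding DExt_eq_Int
  by (intro external_triangulation_if_closed subfunctor_Int ET4_closed_Int ET4op_closed_Int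
      subfunctor_IExt subfunctor_PExt ET4_closed_IExt ET4_closed_PExt ET4op_closed_IExt
      ET4op_closed_PExt)

section \<open>Injective and projective objects\<close>

lemma subset_Inj_IExt:
  assumes "D \<subseteq> Ob X" shows "D \<subseteq> Inj X (IExt X D)"
proof
  fix I assume I: "I \<in> D"
  have "IExt X D C I = {Ezero X C I}" if C: "C \<in> Ob X" for C
  proof
    have Io: "I \<in> Ob X" using I assms by blast
    show "IExt X D C I \<subseteq> {Ezero X C I}"
      using IExt_iff[OF C Io] I Idm_Hom[OF Io] Push_Idm[OF C Io] by fastforce
    show "{Ezero X C I} \<subseteq> IExt X D C I" using subfunctor_Ezero[OF subfunctor_IExt C Io] by blast
  qed
  then show "I \<in> Inj X (IExt X D)" unfolding Inj_def using I assms by blast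
qed

lemma subset_Proj_PExt:
  assumes "D \<subseteq> Ob X" shows "D \<subseteq> Proj X (PExt X D)"
proof
  fix P assume P: "P \<in> D"
  have "PExt X D P A = {Ezero X P A}" if A: "A \<in> Ob X" for A
  proof
    have Po: "P \<in> Ob X" using P assms by blast
    show "PExt X D P A \<subseteq> {Ezero X P A}"
      using PExt_iff[OF Po A] P Idm_Hom[OF Po] Pull_Idm[OF Po A] by fastforce
    show "{Ezero X P A} \<subseteq> PExt X D P A" using subfunctor_Ezero[OF subfunctor_PExt Po A] by blast
  qed
  then show "P \<in> Proj X (PExt X D)" unfolding Proj_def using P assms by blast
qed

lemma biproduct_iso:
  assumes bp: "biproduct X A1 A2 S i1 i2 p1 p2" and b: "b \<in> Hom X S T" and b': "b' \<in> Hom X T S"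
    and inv1: "Cmp X b' b = Idm X S" and inv2: "Cmp X b b' = Idm X T"
  shows "biproduct X A1 A2 T (Cmp X b i1) (Cmp X b i2) (Cmp X p1 b') (Cmp X p2 b')"
proof -
  have h: "i1 \<in> Hom X A1 S" "i2 \<in> Hom X A2 S" "p1 \<in> Hom X S A1" "p2 \<in> Hom X S A2"
    and sum: "Madd X (Cmp X i1 p1) (Cmp X i2 p2) = Idm X S"
    using bp unfolding biproduct_def by auto
  have cancel: "Cmp X (Cmp X p b') (Cmp X b i) = Cmp X p i"
    if i: "i \<in> Hom X A S" and p: "p \<in> Hom X S B" for i p A B
    using comp_assoc[OF comp_Hom[OF i b] b' p] comp_assoc[OF i b b'] inv1 comp_Idm_left[OF i]
    by simp
  have conj: "Cmp X (Cmp X b i) (Cmp X p b') = Cmp X b (Cmp X (Cmp X i p) b')"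
    if i: "i \<in> Hom X A S" and p: "p \<in> Hom X S A" for i p A
    using comp_assoc[OF comp_Hom[OF b' p] i b] comp_assoc[OF b' p i] by simp
  have ip: "Cmp X i1 p1 \<in> Hom X S S" "Cmp X i2 p2 \<in> Hom X S S" using comp_Hom h by auto
  have "Madd X (Cmp X (Cmp X b i1) (Cmp X p1 b')) (Cmp X (Cmp X b i2) (Cmp X p2 b'))
      = Cmp X b (Cmp X (Madd X (Cmp X i1 p1) (Cmp X i2 p2)) b')"
    using conj[OF h(1,3)] conj[OF h(2,4)] comp_distrib_right[OF b' ip]
      comp_distrib_left[OF comp_Hom[OF b' ip(1)] comp_Hom[OF b' ip(2)] b] by simp
  also have "\<dots> = Idm X T" using sum comp_Idm_left[OF b'] inv2 by simp
  finally show ?thesis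
    using bp comp_Hom[OF h(1) b] comp_Hom[OF h(2) b] comp_Hom[OF b' h(3)] comp_Hom[OF b' h(4)]
      cancel[OF h(1,3)] cancel[OF h(2,4)] cancel[OF h(2,3)] cancel[OF h(1,4)]
    unfolding biproduct_def by simp
qed

lemma biproduct_swap: "biproduct X A1 A2 S i1 i2 p1 p2 \<Longrightarrow> biproduct X A2 A1 S i2 i1 p2 p1"
  unfolding biproduct_def using Madd_commute comp_Hom by metis

text \<open>By (ET2) any realisation of \<open>0\<close> is equivalent to the split one.\<close>
lemma Rlz_Ezero_biproduct:
  assumes r: "Rlz X C A (Ezero X C A) x y"
  shows "\<exists>i1 i2 p1 p2. biproduct X A C (Cod X x) i1 i2 p1 p2"
proof -
  have o: "C \<in> Ob X" "A \<in> Ob X" using Rlz_D[OF r] by auto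
  obtain S i1 i2 p1 p2 where bp: "biproduct X A C S i1 i2 p1 p2"
    using is_additive o unfolding is_additive_def by blast
  have "seq_equiv X i1 p2 x y"
    using Rlz_iff_seq_equiv[OF Rlz_split[OF bp o(2,1)]] r by blast
  then obtain b where b: "b \<in> Hom X S (Cod X x)" "iso X b"
    using bp HomD unfolding seq_equiv_def biproduct_def by metis
  then obtain b' where "b' \<in> Hom X (Cod X x) S" "Cmp X b' b = Idm X S" "Cmp X b b' = Idm X (Cod X x)"
    using HomD[OF b(1)] unfolding iso_def by metis
  then show ?thesis using biproduct_iso[OF bp b(1)] by blast
qed

lemma split_inflation_summand:
  assumes "closed_under_summands X D" and "Rlz X C A (Ezero X C A) x y" and "Cod X x \<in> D"
  shows "A \<in> D"
  using assms Rlz_Ezero_biproduct unfolding closed_under_summands_def by blast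

lemma split_deflation_summand:
  assumes "closed_under_summands X D" and r: "Rlz X C A (Ezero X C A) x y" and "Dom X y \<in> D"
  shows "C \<in> D"
  using assms Rlz_Ezero_biproduct[OF r] biproduct_swap Rlz_D[OF r]
  unfolding closed_under_summands_def by metis

lemma exists_left_approx_Rlz:
  assumes "covariantly_finite X D" and "\<forall>A f. left_approx X D A f \<longrightarrow> inflation X f"
    and "A \<in> Ob X"
  shows "\<exists>f C d y. left_approx X D A f \<and> Rlz X C A d f y"
proof -
  obtain f where f: "left_approx X D A f" using assms unfolding covariantly_finite_def by blast
  then obtain C A' d y where r: "Rlz X C A' d f y" using assms unfolding inflation_def by blast
  moreover have "A' = A" using Rlz_D[OF r] f unfolding left_approx_def by simp
  ultimately show ?thesis using f by blast
qed

lemma exists_right_approx_Rlz: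
  assumes "contravariantly_finite X D" and "\<forall>C g. right_approx X D C g \<longrightarrow> deflation X g"
    and "C \<in> Ob X"
  shows "\<exists>g A d x. right_approx X D C g \<and> Rlz X C A d x g"
proof -
  obtain g where g: "right_approx X D C g" using assms unfolding contravariantly_finite_def by blast
  then obtain C' A d x where r: "Rlz X C' A d x g" using assms unfolding deflation_def by blast
  moreover have "C' = C" using Rlz_D[OF r] g unfolding right_approx_def by simp
  ultimately show ?thesis using g by blast
qed

text \<open>An \<open>F\<close>-injective \<open>I\<close> splits off the extriangle of its left approximation, so it is a
  summand of an object of \<open>D\<close>.\<close>
lemma Inj_eq_and_enough_inj:
  assumes approx_in_F: "\<And>C A d f y. left_approx X D A f \<Longrightarrow> Rlz X C A d f y \<Longrightarrow> d \<in> F C A"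
    and D_Inj: "D \<subseteq> Inj X F" and summands: "closed_under_summands X D"
    and finite: "covariantly_finite X D" and infl: "\<forall>A f. left_approx X D A f \<longrightarrow> inflation X f"
  shows "D = Inj X F \<and> enough_inj X F"
proof -
  have "Inj X F \<subseteq> D"
  proof
    fix I assume I: "I \<in> Inj X F"
    then obtain f C d y where f: "left_approx X D I f" and r: "Rlz X C I d f y"
      using exists_left_approx_Rlz[OF finite infl] unfolding Inj_def by blast
    have "d = Ezero X C I" using I approx_in_F[OF f r] Rlz_D[OF r] unfolding Inj_def by blast
    then show "I \<in> D" using split_inflation_summand[OF summands] r f unfolding left_approx_def by blast
  qed
  moreover have "enough_inj X F" unfolding enough_inj_def
  proof
    fix A assume "A \<in> Ob X"
    then obtain f C d y where f: "left_approx X D A f" and r: "Rlz X C A d f y"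
      using exists_left_approx_Rlz[OF finite infl] by blast
    then show "\<exists>C d x y. d \<in> F C A \<and> Rlz X C A d x y \<and> Cod X x \<in> Inj X F"
      using approx_in_F D_Inj unfolding left_approx_def by blast
  qed
  ultimately show ?thesis using D_Inj by blast
qed

lemma Proj_eq_and_enough_proj:
  assumes approx_in_F: "\<And>C A d x g. right_approx X D C g \<Longrightarrow> Rlz X C A d x g \<Longrightarrow> d \<in> F C A"
    and D_Proj: "D \<subseteq> Proj X F" and summands: "closed_under_summands X D"
    and finite: "contravariantly_finite X D" and defl: "\<forall>C g. right_approx X D C g \<longrightarrow> deflation X g"
  shows "D = Proj X F \<and> enough_proj X F"
proof -
  have "Proj X F \<subseteq> D"
  proof
    fix P assume P: "P \<in> Proj X F"
    then obtain g A d x where g: "right_approx X D P g" and r: "Rlz X P A d x g"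
      using exists_right_approx_Rlz[OF finite defl] unfolding Proj_def by blast
    have "d = Ezero X P A" using P approx_in_F[OF g r] Rlz_D[OF r] unfolding Proj_def by blast
    then show "P \<in> D" using split_deflation_summand[OF summands] r g unfolding right_approx_def by blast
  qed
  moreover have "enough_proj X F" unfolding enough_proj_def
  proof
    fix C assume "C \<in> Ob X"
    then obtain g A d x where g: "right_approx X D C g" and r: "Rlz X C A d x g"
      using exists_right_approx_Rlz[OF finite defl] by blast
    then show "\<exists>A d x y. d \<in> F C A \<and> Rlz X C A d x y \<and> Dom X y \<in> Proj X F"
      using approx_in_F D_Proj unfolding right_approx_def by blast
  qed
  ultimately show ?thesis using D_Proj by blast
qed

lemma left_approx_Rlz_IExt: "left_approx X D A f \<Longrightarrow> Rlz X C A d f y \<Longrightarrow> d \<in> IExt X D C A"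
  unfolding IExt_def left_approx_def using Rlz_D by blast

lemma right_approx_Rlz_PExt: "right_approx X D C g \<Longrightarrow> Rlz X C A d x g \<Longrightarrow> d \<in> PExt X D C A"
  unfolding PExt_def right_approx_def using Rlz_D by blast

lemma Inj_IExt_subset_Inj_DExt: "Inj X (IExt X D) \<subseteq> Inj X (DExt X D)"
  by (rule Inj_antimono)
    (simp_all add: DExt_def subfunctor_Ezero[OF subfunctor_IExt] subfunctor_Ezero[OF subfunctor_PExt])

lemma Proj_PExt_subset_Proj_DExt: "Proj X (PExt X D) \<subseteq> Proj X (DExt X D)"
  by (rule Proj_antimono)
    (simp_all add: DExt_def subfunctor_Ezero[OF subfunctor_IExt] subfunctor_Ezero[OF subfunctor_PExt])

lemma Inj_DExt_eq_and_enough_inj: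
  assumes "D \<subseteq> Ob X" "closed_under_summands X D" "covariantly_finite X D"
    "\<forall>A f. left_approx X D A f \<longrightarrow> inflation X f"
    and cone: "\<forall>A f C d y. left_approx X D A f \<longrightarrow> Rlz X C A d f y \<longrightarrow> D_epic X D y"
  shows "D = Inj X (DExt X D) \<and> enough_inj X (DExt X D)"
proof (rule Inj_eq_and_enough_inj)
  show "d \<in> DExt X D C A" if "left_approx X D A f" "Rlz X C A d f y" for C A d f y
    using that cone left_approx_Rlz_IExt Rlz_D unfolding DExt_def PExt_def by blast
  show "D \<subseteq> Inj X (DExt X D)"
    using subset_Inj_IExt[OF assms(1)] Inj_IExt_subset_Inj_DExt by blast
qed (use assms in blast)+

lemma Proj_DExt_eq_and_enough_proj:
  assumes "D \<subseteq> Ob X" "closed_under_summands X D" "contravariantly_finite X D"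
    "\<forall>C g. right_approx X D C g \<longrightarrow> deflation X g"
    and cocone: "\<forall>C g A d x. right_approx X D C g \<longrightarrow> Rlz X C A d x g \<longrightarrow> D_monic X D x"
  shows "D = Proj X (DExt X D) \<and> enough_proj X (DExt X D)"
proof (rule Proj_eq_and_enough_proj)
  show "d \<in> DExt X D C A" if "right_approx X D C g" "Rlz X C A d x g" for C A d x g
    using that cocone right_approx_Rlz_PExt Rlz_D unfolding DExt_def IExt_def by blast
  show "D \<subseteq> Proj X (DExt X D)"
    using subset_Proj_PExt[OF assms(1)] Proj_PExt_subset_Proj_DExt by blast
qed (use assms in blast)+

end

theorem mainTheorem7:
  fixes X :: "('o,'m,'e) extcat" and D :: "'o set" and idx :: "'i itself"
  assumes "extriangulated X" and "idem_complete X" and "D \<subseteq> Ob X"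
  shows "external_triangulation X (IExt X D) \<and>
         external_triangulation X (PExt X D) \<and>
         external_triangulation X (DExt X D) \<and>
         D \<subseteq> Inj X (IExt X D) \<and> Inj X (IExt X D) \<subseteq> Inj X (DExt X D) \<and>
         D \<subseteq> Proj X (PExt X D) \<and> Proj X (PExt X D) \<subseteq> Proj X (DExt X D) \<and>
         (closed_under_sums idx X D \<and> closed_under_summands X D \<longrightarrow>
           ((covariantly_finite X D \<and> (\<forall>A f. left_approx X D A f \<longrightarrow> inflation X f)
              \<longrightarrow> D = Inj X (IExt X D) \<and> enough_inj X (IExt X D)) \<and>
            (contravariantly_finite X D \<and> (\<forall>C f. right_approx X D C f \<longrightarrow> deflation X f)
              \<longrightarrow> D = Proj X (PExt X D) \<and> enough_proj X (PExt X D)) \<and>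
            (functorially_finite X D \<and>
             (\<forall>A f. left_approx X D A f \<longrightarrow> inflation X f) \<and>
             (\<forall>C f. right_approx X D C f \<longrightarrow> deflation X f) \<and>
             (\<forall>A f C d y. left_approx X D A f \<longrightarrow> Rlz X C A d f y \<longrightarrow> D_epic X D y) \<and>
             (\<forall>C g A d x. right_approx X D C g \<longrightarrow> Rlz X C A d x g \<longrightarrow> D_monic X D x)
              \<longrightarrow> D = Inj X (DExt X D) \<and> D = Proj X (DExt X D) \<and>
                  enough_inj X (DExt X D) \<and> enough_proj X (DExt X D))))"
proof -
  interpret extriangulated_category X by unfold_locales (fact assms(1))
  note D_Ob = assms(3)
  have part_a: "D = Inj X (IExt X D) \<and> enough_inj X (IExt X D)"
    if "closed_under_summands X D" "covariantly_finite X D"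
      "\<forall>A f. left_approx X D A f \<longrightarrow> inflation X f"
    using Inj_eq_and_enough_inj[OF left_approx_Rlz_IExt subset_Inj_IExt[OF D_Ob] that] .
  have part_b: "D = Proj X (PExt X D) \<and> enough_proj X (PExt X D)"
    if "closed_under_summands X D" "contravariantly_finite X D"
      "\<forall>C g. right_approx X D C g \<longrightarrow> deflation X g"
    using Proj_eq_and_enough_proj[OF right_approx_Rlz_PExt subset_Proj_PExt[OF D_Ob] that] .
  show ?thesis
    using external_triangulation_IExt external_triangulation_PExt external_triangulation_DExt
      subset_Inj_IExt[OF D_Ob] subset_Proj_PExt[OF D_Ob]
      Inj_IExt_subset_Inj_DExt Proj_PExt_subset_Proj_DExt part_a part_b
      Inj_DExt_eq_and_enough_inj[OF D_Ob] Proj_DExt_eq_and_enough_proj[OF D_Ob]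
    unfolding functorially_finite_def by blast
qed

end
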